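(* Let $G$ be a finite simple undirected graph on $N$ vertices with Laplacian $L$, and fix $t\ge 0$. Among all classical (diagonal) states $\rho_{\mathrm C}=\sum_{k=1}^N z_k\,|k\rangle\langle k|$ (with $z_k\ge 0$, $\sum_k z_k=1$), the minimum of $\mathcal F\big(\mathcal E_{\mathrm C}(\rho_{\mathrm C}),\mathcal E_{\mathrm Q}(\rho_{\mathrm C})\big)$ is attained at a localized state $\rho_j=|j\rangle\langle j|$ for some vertex $j$; that is, $$\min_{\rho_{\mathrm C}}\mathcal F\big(\mathcal E_{\mathrm C}(\rho_{\mathrm C}),\mathcal E_{\mathrm Q}(\rho_{\mathrm C})\big)=\min_{j}\mathcal F\big(\mathcal E_{\mathrm C}(\rho_j),\mathcal E_{\mathrm Q}(\rho_j)\big).$$ Consequently $D_{QC}(t)=\max_j\big(1-\mathcal F(\mathcal E_{\mathrm C}(\rho_j),\mathcal E_{\mathrm Q}(\rho_j))\big)$.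
   Context: $G$ is a finite simple undirected graph with vertex set $\{1,\dots,N\}$; $\{|k\rangle\}_{k=1}^N$ is an orthonormal basis of $\mathbb C^N$ (localized states). The Laplacian $L$ is the real symmetric $N\times N$ matrix with $L_{jk}=1$ if $j\neq k$ are adjacent, $L_{jk}=0$ if $j\ne k$ are not adjacent, and $L_{jj}=-d_j$ where $d_j$ is the degree of vertex $j$. For $t\ge0$ define the classical map on density matrices $\mathcal E_{\mathrm C}(\rho)=\sum_{k}\big(\sum_j p_{kj}(t)\rho_{jj}\big)|k\rangle\langle k|$ with $p_{kj}(t)=\langle k|e^{Lt}|j\rangle$, and the quantum map $\mathcal E_{\mathrm Q}(\rho)=e^{iLt}\rho\, e^{-iLt}$. The fidelity is $\mathcal F(\rho_1,\rho_2)=\big[\mathrm{Tr}\sqrt{\sqrt{\rho_1}\rho_2\sqrt{\rho_1}}\big]^2$. The QC-distance is $D_{QC}(t)=1-\min_{\rho_{\mathrm C}}\mathcal F(\mathcal E_{\mathrm C}(\rho_{\mathrm C}),\mathcal E_{\mathrm Q}(\rho_{\mathrm C}))$, the minimum over all diagonal density matrices $\rho_{\mathrm C}$ in the basis $\{|k\rangle\}$. *)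

theory Defs
  imports "HOL-Analysis.Analysis"
begin

text \<open>Vertices are the elements of a finite type 'n (so N = CARD('n) \<ge> 1).
  Matrices are complex ^'n^'n, indexed by the vertices (localized basis |k>).\<close>

definition simple_graph :: "('n::finite \<Rightarrow> 'n \<Rightarrow> bool) \<Rightarrow> bool" where
  "simple_graph E \<longleftrightarrow> (\<forall>i j. E i j \<longrightarrow> E j i) \<and> (\<forall>i. \<not> E i i)"

definition degree :: "('n::finite \<Rightarrow> 'n \<Rightarrow> bool) \<Rightarrow> 'n \<Rightarrow> nat" where
  "degree E j = card {k. E j k}"

text \<open>Laplacian with the paper's sign convention: L_jk = 1 if adjacent, L_jj = -d_j.\<close>
definition laplacian :: "('n::finite \<Rightarrow> 'n \<Rightarrow> bool) \<Rightarrow> real^'n^'n" where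
  "laplacian E = (\<chi> j k. if j = k then - real (degree E j) else if E j k then 1 else 0)"

primrec matpow :: "'a::comm_ring_1^'n::finite^'n \<Rightarrow> nat \<Rightarrow> 'a^'n^'n" where
  "matpow A 0 = mat 1"
| "matpow A (Suc k) = A ** matpow A k"

definition mexp :: "complex^'n::finite^'n \<Rightarrow> complex^'n^'n" where
  "mexp A = (\<chi> i j. (\<Sum>k. (matpow A k) $ i $ j / of_nat (fact k)))"

definition cmat_of_real :: "real^'n::finite^'n \<Rightarrow> complex^'n^'n" where
  "cmat_of_real A = (\<chi> i j. complex_of_real (A $ i $ j))"

definition adjoint :: "complex^'n::finite^'n \<Rightarrow> complex^'n^'n" where
  "adjoint A = (\<chi> i j. cnj (A $ j $ i))"

definition mtrace :: "complex^'n::finite^'n \<Rightarrow> complex" where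
  "mtrace A = (\<Sum>i\<in>UNIV. A $ i $ i)"

text \<open>Positive semidefinite: x* A x is real and nonnegative for every x (this forces Hermitian).\<close>
definition psd :: "complex^'n::finite^'n \<Rightarrow> bool" where
  "psd A \<longleftrightarrow> (\<forall>x::complex^'n. let q = (\<Sum>i\<in>UNIV. \<Sum>j\<in>UNIV. cnj (x $ i) * A $ i $ j * x $ j)
                                 in Im q = 0 \<and> Re q \<ge> 0)"

definition msqrt :: "complex^'n::finite^'n \<Rightarrow> complex^'n^'n" where
  "msqrt A = (THE B. psd B \<and> B ** B = A)"

text \<open>Fidelity F(r1,r2) = [Tr sqrt(sqrt r1 r2 sqrt r1)]^2 (the trace is real for density matrices).\<close>
definition fidelity :: "complex^'n::finite^'n \<Rightarrow> complex^'n^'n \<Rightarrow> real" where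
  "fidelity r1 r2 = (Re (mtrace (msqrt (msqrt r1 ** r2 ** msqrt r1)))) ^ 2"

definition diag_mat :: "('n::finite \<Rightarrow> complex) \<Rightarrow> complex^'n^'n" where
  "diag_mat z = (\<chi> i j. if i = j then z i else 0)"

definition classical_states :: "(complex^'n::finite^'n) set" where
  "classical_states = {diag_mat (\<lambda>k. complex_of_real (z k)) | z. (\<forall>k. z k \<ge> 0) \<and> (\<Sum>k\<in>UNIV. z k) = 1}"

definition loc_state :: "'n::finite \<Rightarrow> complex^'n^'n" where
  "loc_state j = diag_mat (\<lambda>k. if k = j then 1 else 0)"

definition ptrans :: "('n::finite \<Rightarrow> 'n \<Rightarrow> bool) \<Rightarrow> real \<Rightarrow> 'n \<Rightarrow> 'n \<Rightarrow> complex" where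
  "ptrans E t k j = mexp (t *\<^sub>R cmat_of_real (laplacian E)) $ k $ j"

definition classical_map :: "('n::finite \<Rightarrow> 'n \<Rightarrow> bool) \<Rightarrow> real \<Rightarrow> complex^'n^'n \<Rightarrow> complex^'n^'n" where
  "classical_map E t \<rho> = diag_mat (\<lambda>k. \<Sum>j\<in>UNIV. ptrans E t k j * \<rho> $ j $ j)"

definition quantum_map :: "('n::finite \<Rightarrow> 'n \<Rightarrow> bool) \<Rightarrow> real \<Rightarrow> complex^'n^'n \<Rightarrow> complex^'n^'n" where
  "quantum_map E t \<rho> =
     (let U = mexp (\<chi> a b. \<i> * complex_of_real t * laplacian E $ a $ b) in U ** \<rho> ** adjoint U)"

definition D_QC :: "('n::finite \<Rightarrow> 'n \<Rightarrow> bool) \<Rightarrow> real \<Rightarrow> real" where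
  "D_QC E t = 1 - (INF \<rho>\<in>(classical_states :: (complex^'n^'n) set).
                     fidelity (classical_map E t \<rho>) (quantum_map E t \<rho>))"

end

theory Submission
  imports Defs
begin

text \<open>
  Write \<open>U = e\<^sup>i\<^sup>L\<^sup>t\<close>, \<open>p\<^sub>k\<^sub>j = \<langle>k|e\<^sup>L\<^sup>t|j\<rangle>\<close> and, for a classical state with weights \<open>z\<close>,
  \<open>q\<^sub>k = \<Sum>\<^sub>j p\<^sub>k\<^sub>j z\<^sub>j\<close> for the diagonal of \<open>\<E>\<^sub>C(\<rho>)\<close>. Then
  \<open>\<surd>\<E>\<^sub>C(\<rho>) \<E>\<^sub>Q(\<rho>) \<surd>\<E>\<^sub>C(\<rho>) = M = \<Sum>\<^sub>j z\<^sub>j a\<^sub>j a\<^sub>j\<^sup>*\<close> with \<open>a\<^sub>j\<^sub>k = \<surd>q\<^sub>k U\<^sub>k\<^sub>j\<close>,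
  so the fidelity is \<open>(Tr \<surd>M)\<^sup>2\<close>; for the localized state \<open>\<rho>\<^sub>j\<close> the matrix \<open>M\<close> has rank one and
  the fidelity is \<open>f\<^sub>j = \<Sum>\<^sub>k p\<^sub>k\<^sub>j |U\<^sub>k\<^sub>j|\<^sup>2\<close>.

  For every positive definite \<open>A\<close>, Cauchy--Schwarz for the form of \<open>A\<^sup>-\<^sup>1\<close> gives
  \<open>|a\<^sub>j\<^sub>k|\<^sup>2 \<le> A\<^sub>k\<^sub>k \<cdot> a\<^sub>j\<^sup>* A\<^sup>-\<^sup>1 a\<^sub>j\<close>; since the weights \<open>p\<^sub>k\<^sub>j / q\<^sub>k\<close> sum to at most one against \<open>z\<close>,
  AM--GM yields \<open>\<Sum>\<^sub>j z\<^sub>j \<surd>f\<^sub>j \<le> (Tr A + Tr A\<^sup>-\<^sup>1 M) / 2\<close>, which tends to \<open>Tr \<surd>M\<close> as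
  \<open>A \<rightarrow> \<surd>M\<close>. Hence \<open>\<surd>F(\<rho>) \<ge> \<Sum>\<^sub>j z\<^sub>j \<surd>f\<^sub>j \<ge> min\<^sub>j \<surd>f\<^sub>j\<close>. The argument needs
  \<open>p\<^sub>k\<^sub>j \<ge> 0\<close>, which holds because \<open>L + N I\<close> is entrywise nonnegative, and the
  existence and uniqueness of positive semidefinite square roots, obtained from the binomial
  series of \<open>\<surd>(1 - x)\<close>.
\<close>

section \<open>Positive semidefinite matrices\<close>

definition sesq :: "complex^'n::finite^'n \<Rightarrow> complex^'n \<Rightarrow> complex^'n \<Rightarrow> complex" where
  "sesq A x y = (\<Sum>i\<in>UNIV. \<Sum>j\<in>UNIV. cnj (x $ i) * A $ i $ j * y $ j)"

definition sqnorm :: "complex^'n::finite \<Rightarrow> real" where "sqnorm x = (\<Sum>i\<in>UNIV. (cmod (x$i))^2)"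

definition hermitian :: "complex^'n::finite^'n \<Rightarrow> bool" where
  "hermitian A \<longleftrightarrow> (\<forall>i j. A$i$j = cnj (A$j$i))"

lemma psd_iff_sesq: "psd A \<longleftrightarrow> (\<forall>x. Im (sesq A x x) = 0 \<and> Re (sesq A x x) \<ge> 0)"
  by (simp add: psd_def sesq_def Let_def)

lemma sesq_add_left: "sesq A (x + y) z = sesq A x z + sesq A y z"
  by (simp add: sesq_def sum.distrib algebra_simps)
lemma sesq_add_right: "sesq A x (y + z) = sesq A x y + sesq A x z"
  by (simp add: sesq_def sum.distrib algebra_simps)
lemma sesq_scale_left: "sesq A (c *s x) y = cnj c * sesq A x y"
  by (simp add: sesq_def sum_distrib_left algebra_simps)
lemma sesq_scale_right: "sesq A x (c *s y) = c * sesq A x y"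
  by (simp add: sesq_def sum_distrib_left algebra_simps)
lemma sesq_axis: "sesq A (axis i a) (axis j b) = cnj a * A$i$j * b"
  by (simp add: sesq_def axis_def if_distrib[where f=cnj] if_distrib[where f="\<lambda>u. u * _"] if_distrib[where f="\<lambda>u. _ * u"] cong: if_cong)

lemma sesq_axis_add:
  "sesq A (axis i 1 + axis j c) (axis i 1 + axis j c) = A$i$i + cnj c * A$j$j * c + c * A$i$j + cnj c * A$j$i"
  by (simp add: sesq_add_left sesq_add_right sesq_axis)

lemma psd_imp_hermitian: assumes "psd A" shows "hermitian A"
  unfolding hermitian_def
proof (intro allI)
  fix i j
  have real: "\<And>x. Im (sesq A x x) = 0" using assms by (simp add: psd_iff_sesq)
  have ii: "Im (A$i$i) = 0" and jj: "Im (A$j$j) = 0"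
    using real[of "axis i 1"] real[of "axis j 1"] by (simp_all add: sesq_axis)
  have "Im (A$i$j) + Im (A$j$i) = 0"
    using real[of "axis i 1 + axis j 1"] ii jj unfolding sesq_axis_add by simp
  moreover have "Re (A$i$j) - Re (A$j$i) = 0"
    using real[of "axis i 1 + axis j \<i>"] ii jj unfolding sesq_axis_add by simp
  ultimately show "A$i$j = cnj (A$j$i)" by (simp add: complex_eq_iff)
qed

lemma hermitian_sesq_cnj: assumes "hermitian A" shows "cnj (sesq A x y) = sesq A y x"
proof -
  have h: "\<And>i j. cnj (A$i$j) = A$j$i" using assms unfolding hermitian_def by metis
  have "cnj (sesq A x y) = (\<Sum>i\<in>UNIV. \<Sum>j\<in>UNIV. x $ i * A $ j $ i * cnj (y $ j))"
    by (simp add: sesq_def h)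
  also have "\<dots> = sesq A y x" unfolding sesq_def by (subst sum.swap) (simp add: algebra_simps)
  finally show ?thesis .
qed

lemma hermitian_sesq_real: "hermitian A \<Longrightarrow> Im (sesq A x x) = 0"
  using hermitian_sesq_cnj[of A x x] by (metis Reals_cnj_iff complex_is_Real_iff)


lemma le_mult_if_quadratic_nonneg:
  fixes p q B :: real
  assumes "\<And>s. 0 \<le> p - 2 * s * B + s^2 * B * q" "B \<ge> 0" "q \<ge> 0"
  shows "B \<le> p * q"
proof (cases "q = 0")
  case True
  show ?thesis
  proof (rule ccontr)
    assume "\<not> B \<le> p * q"
    hence "B > 0" using True by simp
    have "0 \<le> p - 2 * ((p+1)/(2*B)) * B" using assms(1)[of "(p+1)/(2*B)"] True by simp
    also have "\<dots> = -1" using \<open>B > 0\<close> by (simp add: field_simps)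
    finally show False by simp
  qed
next
  case False
  hence q: "q > 0" using assms by simp
  have "0 \<le> p - 2 * (1/q) * B + (1/q)^2 * B * q" by (rule assms(1))
  also have "\<dots> = p - B / q" using q by (simp add: field_simps power2_eq_square)
  finally show ?thesis using q by (simp add: field_simps)
qed

lemma psd_cauchy_schwarz: assumes "psd A"
  shows "(cmod (sesq A x y))^2 \<le> Re (sesq A x x) * Re (sesq A y y)"
proof -
  have h: "hermitian A" using assms by (rule psd_imp_hermitian)
  define b where "b = sesq A x y"
  have byx: "sesq A y x = cnj b" using hermitian_sesq_cnj[OF h, of x y] by (simp add: b_def)
  have yy: "Im (sesq A y y) = 0" using h by (rule hermitian_sesq_real)
  have "0 \<le> Re (sesq A x x) - 2 * s * (cmod b)^2 + s^2 * (cmod b)^2 * Re (sesq A y y)" for s :: real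
  proof -
    define l where "l = - (complex_of_real s * cnj b)"
    have e: "sesq A (x + l *s y) (x + l *s y) = sesq A x x + l * b + cnj l * cnj b + cnj l * l * sesq A y y"
      by (simp add: sesq_add_left sesq_add_right sesq_scale_left sesq_scale_right byx b_def algebra_simps)
    have g: "Re (sesq A (x + l *s y) (x + l *s y)) \<ge> 0" using assms by (simp add: psd_iff_sesq)
    have cb: "cnj b * b = complex_of_real ((cmod b)^2)" using complex_norm_square[of b] by (simp add: mult.commute)
    have cb2: "b * cnj b = (complex_of_real (cmod b))^2" using complex_norm_square[of b] by simp
    have 1: "l * b = - (complex_of_real (s * (cmod b)^2))" 
      unfolding l_def by (simp add: cb flip: mult.assoc)
    have 2: "cnj l * cnj b = - (complex_of_real (s * (cmod b)^2))" 
      unfolding l_def by (simp add: mult.assoc cb cb2)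
    have 3: "cnj l * l = complex_of_real (s^2 * (cmod b)^2)"
      unfolding l_def using cb2 by (simp add: power2_eq_square mult.assoc mult.left_commute[of b])
    have "Re (sesq A x x + l * b + cnj l * cnj b + cnj l * l * sesq A y y) = Re (sesq A x x) - 2 * s * (cmod b)^2 + s^2 * (cmod b)^2 * Re (sesq A y y)"
      unfolding 1 2 3 using yy by simp
    then show ?thesis using g e by simp
  qed
  moreover have "Re (sesq A y y) \<ge> 0" using assms by (simp add: psd_iff_sesq)
  ultimately show ?thesis unfolding b_def[symmetric] by (intro le_mult_if_quadratic_nonneg) auto
qed

lemma adjoint_mult: "adjoint (A ** B) = adjoint B ** adjoint A"
  by (simp add: adjoint_def matrix_matrix_mult_def vec_eq_iff mult.commute)

lemma hermitian_iff_adjoint: "hermitian A \<longleftrightarrow> adjoint A = A"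
  unfolding hermitian_def adjoint_def vec_eq_iff by (auto simp: eq_commute[of "cnj _"])

lemma sesq_mult_vec: "sesq A x y = (\<Sum>i\<in>UNIV. cnj (x$i) * (A *v y)$i)"
  by (simp add: sesq_def matrix_vector_mult_def sum_distrib_left mult.assoc)

lemma sum_swap3: "(\<Sum>i\<in>A. \<Sum>j\<in>B. \<Sum>m\<in>C. f i j m) = (\<Sum>m\<in>C. \<Sum>j\<in>B. \<Sum>i\<in>A. f i j m)"
proof -
  have "(\<Sum>i\<in>A. \<Sum>j\<in>B. \<Sum>m\<in>C. f i j m) = (\<Sum>j\<in>B. \<Sum>i\<in>A. \<Sum>m\<in>C. f i j m)" by (rule sum.swap)
  also have "\<dots> = (\<Sum>j\<in>B. \<Sum>m\<in>C. \<Sum>i\<in>A. f i j m)" by (intro sum.cong refl) (rule sum.swap)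
  also have "\<dots> = (\<Sum>m\<in>C. \<Sum>j\<in>B. \<Sum>i\<in>A. f i j m)" by (rule sum.swap)
  finally show ?thesis .
qed

lemma sesq_mult: "sesq (A ** B) x y = sesq B (adjoint A *v x) y"
proof -
  have "sesq (A ** B) x y = (\<Sum>i\<in>UNIV. \<Sum>j\<in>UNIV. \<Sum>m\<in>UNIV. cnj (x $ i) * A $ i $ m * B $ m $ j * y $ j)"
    by (simp add: sesq_def matrix_matrix_mult_def sum_distrib_left sum_distrib_right mult.assoc)
  also have "\<dots> = (\<Sum>m\<in>UNIV. \<Sum>j\<in>UNIV. \<Sum>i\<in>UNIV. cnj (x $ i) * A $ i $ m * B $ m $ j * y $ j)"
    by (rule sum_swap3)
  also have "\<dots> = sesq B (adjoint A *v x) y"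
    by (simp add: sesq_def matrix_vector_mult_def adjoint_def sum_distrib_left sum_distrib_right mult.assoc mult.left_commute)
  finally show ?thesis .
qed

lemma sesq_mult_hermitian_left: "hermitian A \<Longrightarrow> sesq (A ** B) x y = sesq B (A *v x) y"
  by (simp add: sesq_mult hermitian_iff_adjoint)

lemma sesq_id: "sesq (mat 1) x y = (\<Sum>i\<in>UNIV. cnj (x$i) * y$i)"
  by (simp add: sesq_mult_vec)

lemma sesq_id_diag: "sesq (mat 1) x x = complex_of_real (sqnorm x)"
  unfolding sesq_id sqnorm_def of_real_sum complex_norm_square by (simp add: mult.commute)

lemma psd_id: "psd (mat 1)"
  by (simp add: psd_iff_sesq sesq_id_diag sqnorm_def sum_nonneg)

lemma cauchy_schwarz_sqnorm: "(cmod (\<Sum>i\<in>UNIV. cnj (x$i) * y$i))^2 \<le> sqnorm x * sqnorm y"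
  using psd_cauchy_schwarz[OF psd_id, of x y] by (simp add: sesq_id[symmetric] sesq_id_diag)

lemma sqnorm_nonneg: "sqnorm x \<ge> 0" by (simp add: sqnorm_def sum_nonneg)

lemma sqnorm_zero: "sqnorm x = 0 \<Longrightarrow> x = 0"
  unfolding sqnorm_def by (subst (asm) sum_nonneg_eq_0_iff) (auto simp: vec_eq_iff)

lemma sesq_square_hermitian: "hermitian A \<Longrightarrow> sesq (A ** A) x x = complex_of_real (sqnorm (A *v x))"
proof -
  assume h: "hermitian A"
  have "sesq (A ** A) x x = sesq A (A *v x) x" using sesq_mult_hermitian_left[OF h] by simp
  also have "\<dots> = sesq (mat 1) (A *v x) (A *v x)" by (simp add: sesq_mult_vec)
  finally show ?thesis by (simp add: sesq_id_diag)
qed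

lemma matrix_mul_diff_left: "(A::'a::comm_ring_1^'n::finite^'n) ** (B - C) = A ** B - A ** C"
  by (simp add: matrix_matrix_mult_def vec_eq_iff sum_subtractf algebra_simps)
lemma matrix_mul_diff_right: "((A::'a::comm_ring_1^'n::finite^'n) - B) ** C = A ** C - B ** C"
  by (simp add: matrix_matrix_mult_def vec_eq_iff sum_subtractf algebra_simps)
lemma matrix_mul_add_right: "((A::'a::comm_ring_1^'n::finite^'n) + B) ** C = A ** C + B ** C"
  by (simp add: matrix_matrix_mult_def vec_eq_iff sum.distrib algebra_simps)
lemma sesq_mult_right: "sesq (B ** W) y x = sesq B y (W *v x)"
  by (simp add: sesq_mult_vec matrix_vector_mul_assoc)

lemma sesq_zero: "sesq 0 x y = 0" by (simp add: sesq_def)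
lemma sesq_add: "sesq (A + B) x y = sesq A x y + sesq B x y"
  by (simp add: sesq_def sum.distrib algebra_simps)
lemma sesq_diff: "sesq (A - B) x y = sesq A x y - sesq B x y"
  by (simp add: sesq_def sum_subtractf algebra_simps)

lemma matrix_eq_zero_if_sesq: assumes "\<And>x. sesq A x x = 0" shows "A = 0"
proof -
  have "A $ i $ j = 0" for i j
  proof -
    have ii: "A$i$i = 0" and jj: "A$j$j = 0"
      using assms[of "axis i 1"] assms[of "axis j 1"] by (simp_all add: sesq_axis)
    have "A$i$j + A$j$i = 0"
      using assms[of "axis i 1 + axis j 1"] ii jj unfolding sesq_axis_add by simp
    moreover have "\<i> * A$i$j - \<i> * A$j$i = 0"
      using assms[of "axis i 1 + axis j \<i>"] ii jj unfolding sesq_axis_add by simp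
    ultimately show ?thesis by (simp add: algebra_simps)
  qed
  then show ?thesis by (simp add: vec_eq_iff)
qed

lemma hermitian_diff: "hermitian A \<Longrightarrow> hermitian B \<Longrightarrow> hermitian (A - B)"
  by (simp add: hermitian_iff_adjoint adjoint_def vec_eq_iff)
lemma hermitian_add: "hermitian A \<Longrightarrow> hermitian B \<Longrightarrow> hermitian (A + B)"
  by (simp add: hermitian_iff_adjoint adjoint_def vec_eq_iff)
lemma hermitian_sq: "hermitian A \<Longrightarrow> hermitian (A ** A)"
  by (simp add: hermitian_iff_adjoint adjoint_mult)

lemma hermitian_square_eq_zero: assumes "hermitian W" "W ** W = 0" shows "W = 0"
proof -
  have "complex_of_real (sqnorm (W *v x)) = 0" for x
    using sesq_square_hermitian[OF assms(1), of x] assms(2) by (simp add: sesq_zero)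
  then show ?thesis by (simp add: matrix_eq sqnorm_zero)
qed

section \<open>Square roots of positive semidefinite matrices\<close>

text \<open>\<open>W = B - C\<close> annihilates \<open>B + C\<close>, so \<open>W B W + W C W = 0\<close> with both terms positive
  semidefinite; hence \<open>W\<^sup>3 = 0\<close>, and a Hermitian nilpotent matrix vanishes.\<close>
lemma psd_sqrt_unique_if_commute:
  assumes B: "psd B" and C: "psd C" and comm: "B ** C = C ** B" and sq: "B ** B = C ** C"
  shows "B = C"
proof -
  define W where "W = B - C"
  have hB: "hermitian B" using B by (rule psd_imp_hermitian)
  have hC: "hermitian C" using C by (rule psd_imp_hermitian)
  have hW: "hermitian W" unfolding W_def using hB hC by (rule hermitian_diff)
  have BCW: "(B + C) ** W = 0" unfolding W_def matrix_mul_diff_left matrix_mul_add_right using comm sq by simp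
  have form_sum: "sesq (W ** ((B + C) ** W)) x x = sesq B (W *v x) (W *v x) + sesq C (W *v x) (W *v x)" for x
    by (subst sesq_mult_hermitian_left[OF hW]) (simp only: matrix_mul_add_right sesq_add sesq_mult_right)
  have forms_zero: "sesq B (W *v x) (W *v x) = 0 \<and> sesq C (W *v x) (W *v x) = 0" for x
  proof -
    have sum_zero: "sesq B (W *v x) (W *v x) + sesq C (W *v x) (W *v x) = 0" using form_sum[of x] BCW by (simp add: sesq_zero)
    have "Im (sesq B (W *v x) (W *v x)) = 0" "Re (sesq B (W *v x) (W *v x)) \<ge> 0"
         "Im (sesq C (W *v x) (W *v x)) = 0" "Re (sesq C (W *v x) (W *v x)) \<ge> 0"
      using B C by (auto simp: psd_iff_sesq)
    with sum_zero show ?thesis by (simp add: complex_eq_iff)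
  qed
  have WBW: "W ** (B ** W) = 0"
    by (rule matrix_eq_zero_if_sesq, subst sesq_mult_hermitian_left[OF hW]) (simp only: sesq_mult_right forms_zero)
  have WCW: "W ** (C ** W) = 0"
    by (rule matrix_eq_zero_if_sesq, subst sesq_mult_hermitian_left[OF hW]) (simp only: sesq_mult_right forms_zero)
  have W_cube: "W ** (W ** W) = 0"
  proof -
    have "W ** (W ** W) = W ** (B ** W) - W ** (C ** W)" unfolding W_def matrix_mul_diff_left matrix_mul_diff_right by simp
    then show ?thesis using WBW WCW by simp
  qed
  have "(W ** W) ** (W ** W) = 0" using W_cube by (simp add: matrix_mul_assoc[symmetric])
  then have "W ** W = 0" by (rule hermitian_square_eq_zero[OF hermitian_sq[OF hW]])
  then have "W = 0" by (rule hermitian_square_eq_zero[OF hW])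
  then show ?thesis by (simp add: W_def)
qed

text \<open>Taylor coefficients of \<open>\<surd>(1 - x)\<close>; all but the first are negative.\<close>
definition sqrt_coeff :: "nat \<Rightarrow> real" where "sqrt_coeff k = (-1)^k * ((1/2::real) gchoose k)"

lemma sqrt_coeff_0: "sqrt_coeff 0 = 1" by (simp add: sqrt_coeff_def)

lemma sqrt_coeff_rec: "sqrt_coeff (Suc k) = sqrt_coeff k * (real k - 1/2) / (real k + 1)"
proof -
  have "(1/2::real) * ((1/2) gchoose k) = real k * ((1/2) gchoose k) + real (Suc k) * ((1/2) gchoose (Suc k))"
    by (rule gbinomial_mult_1)
  hence e: "((1/2::real) gchoose (Suc k)) = (1/2 - real k) * ((1/2) gchoose k) / (real k + 1)"
    by (simp add: field_simps)
  have "sqrt_coeff (Suc k) = - ((-1)^k * ((1/2::real) gchoose (Suc k)))" by (simp add: sqrt_coeff_def)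
  also have "\<dots> = - ((-1)^k * ((1/2 - real k) * ((1/2) gchoose k) / (real k + 1)))" using e by simp
  also have "\<dots> = sqrt_coeff k * (real k - 1/2) / (real k + 1)" by (simp add: sqrt_coeff_def field_simps)
  finally show ?thesis .
qed

lemma sqrt_coeff_1: "sqrt_coeff (Suc 0) = -1/2" using sqrt_coeff_rec[of 0] by (simp add: sqrt_coeff_0)

lemma sqrt_coeff_neg: "k \<ge> 1 \<Longrightarrow> sqrt_coeff k \<le> 0"
proof (induction k)
  case 0 then show ?case by simp
next
  case (Suc k)
  show ?case
  proof (cases "k = 0")
    case True then show ?thesis by (simp add: sqrt_coeff_1)
  next
    case False
    then have "sqrt_coeff k \<le> 0" using Suc by simp
    moreover have "(real k - 1/2) / (real k + 1) \<ge> 0" using False by simp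
    ultimately show ?thesis unfolding sqrt_coeff_rec by (metis mult_nonpos_nonneg times_divide_eq_right)
  qed
qed

lemma sqrt_coeff_partial_sum: "(\<Sum>k\<le>n. sqrt_coeff k) = (1 - 2 * real n) * sqrt_coeff n"
proof (induction n)
  case 0 then show ?case by (simp add: sqrt_coeff_0)
next
  case (Suc n)
  have "(\<Sum>k\<le>Suc n. sqrt_coeff k) = (1 - 2 * real n) * sqrt_coeff n + sqrt_coeff (Suc n)" using Suc by simp
  also have "(1 - 2 * real n) * sqrt_coeff n = - 2 * (real n + 1) * sqrt_coeff (Suc n)"
    unfolding sqrt_coeff_rec by (simp add: field_simps)
  finally show ?case by (simp add: algebra_simps)
qed

lemma sqrt_coeff_partial_sum_nonneg: "(\<Sum>k\<le>n. sqrt_coeff k) \<ge> 0"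
proof (cases "n = 0")
  case True then show ?thesis by (simp add: sqrt_coeff_0)
next
  case False
  then have "sqrt_coeff n \<le> 0" "1 - 2 * real n \<le> 0" using sqrt_coeff_neg[of n] by auto
  then show ?thesis unfolding sqrt_coeff_partial_sum by (simp add: mult_nonpos_nonpos)
qed

lemma sqrt_coeff_abs_partial_sum: "(\<Sum>k<n. \<bar>sqrt_coeff k\<bar>) \<le> 2"
proof (cases n)
  case 0 then show ?thesis by simp
next
  case (Suc m)
  have "(\<Sum>k<n. \<bar>sqrt_coeff k\<bar>) = (\<Sum>k\<le>m. \<bar>sqrt_coeff k\<bar>)" using Suc by (simp add: lessThan_Suc_atMost)
  also have "\<dots> = (\<Sum>k\<le>m. (if k = 0 then 2 else 0) - sqrt_coeff k)"
  proof (intro sum.cong refl)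
    fix k show "\<bar>sqrt_coeff k\<bar> = (if k = 0 then 2 else 0) - sqrt_coeff k"
    proof (cases "k = 0")
      case True then show ?thesis by (simp add: sqrt_coeff_0)
    next
      case False then have "sqrt_coeff k \<le> 0" by (intro sqrt_coeff_neg) simp
      then show ?thesis using False by simp
    qed
  qed
  also have "\<dots> = 2 - (\<Sum>k\<le>m. sqrt_coeff k)" by (simp add: sum_subtractf)
  also have "\<dots> \<le> 2" using sqrt_coeff_partial_sum_nonneg[of m] by simp
  finally show ?thesis .
qed

lemma sqrt_coeff_abs_summable: "summable (\<lambda>k. \<bar>sqrt_coeff k\<bar>)"
  by (rule summableI_nonneg_bounded[where x=2]) (auto simp: sqrt_coeff_abs_partial_sum)

lemma sqrt_coeff_summable: "summable sqrt_coeff"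
  using sqrt_coeff_abs_summable by (rule summable_rabs_cancel)

lemma sqrt_coeff_suminf_nonneg: "suminf sqrt_coeff \<ge> 0"
proof -
  have "(\<lambda>n. \<Sum>k<n. sqrt_coeff k) \<longlonglongrightarrow> suminf sqrt_coeff" using sqrt_coeff_summable by (rule summable_LIMSEQ)
  moreover have "(\<Sum>k<n. sqrt_coeff k) \<ge> 0" for n
    by (cases n) (simp_all add: lessThan_Suc_atMost sqrt_coeff_partial_sum_nonneg)
  ultimately show ?thesis using LIMSEQ_le_const[of "\<lambda>n. \<Sum>k<n. sqrt_coeff k" "suminf sqrt_coeff" 0] by blast
qed

lemma sqrt_coeff_convolution: "(\<Sum>k\<le>n. sqrt_coeff k * sqrt_coeff (n - k)) = (if n = 0 then 1 else if n = 1 then -1 else 0)"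
proof -
  have "(\<Sum>k\<le>n. sqrt_coeff k * sqrt_coeff (n - k)) = (-1)^n * (\<Sum>k=0..n. ((1/2::real) gchoose k) * ((1/2) gchoose (n - k)))"
    unfolding sum_distrib_left atMost_atLeast0[symmetric]
  proof (intro sum.cong refl)
    fix k assume "k \<in> {..n}"
    then have "(-1::real)^k * (-1)^(n-k) = (-1)^n" by (simp flip: power_add)
    then show "sqrt_coeff k * sqrt_coeff (n - k) = (-1)^n * (((1/2::real) gchoose k) * ((1/2) gchoose (n - k)))"
      unfolding sqrt_coeff_def by (metis (no_types, lifting) mult.assoc mult.left_commute)
  qed
  also have "\<dots> = (-1)^n * ((1::real) gchoose n)" by (simp add: gbinomial_Vandermonde)
  also have "(1::real) gchoose n = real (1 choose n)" by (metis binomial_gbinomial of_nat_1)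
  also have "real (1 choose n) = (if n = 0 then 1 else if n = 1 then 1 else 0)"
    by (cases n) (auto simp: binomial_eq_0)
  finally show ?thesis by auto
qed

lemma matpow_add: "matpow A (k + l) = matpow A k ** matpow A l"
  by (induction k) (simp_all add: matrix_mul_assoc)

lemma matpow_comm: "matpow A k ** A = A ** matpow A k"
proof -
  have "matpow A (k + 1) = matpow A k ** matpow A 1" by (rule matpow_add)
  then show ?thesis by simp
qed

lemma adjoint_mat_1: "adjoint (mat 1 :: complex^'n::finite^'n) = mat 1"
  by (simp add: adjoint_def mat_def vec_eq_iff)

lemma hermitian_matpow: assumes "hermitian A" shows "hermitian (matpow A k)"
proof (induction k)
  case 0 then show ?case by (simp add: hermitian_iff_adjoint adjoint_mat_1)
next
  case (Suc k)
  have "adjoint (matpow A (Suc k)) = matpow A k ** A"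
    using Suc assms by (simp add: adjoint_mult hermitian_iff_adjoint)
  then show ?case by (simp add: hermitian_iff_adjoint matpow_comm)
qed

lemma comm_matpow: assumes "B ** A = A ** B" shows "B ** matpow A k = matpow A k ** B"
proof (induction k)
  case 0 then show ?case by simp
next
  case (Suc k)
  have "B ** matpow A (Suc k) = (B ** A) ** matpow A k" by (simp add: matrix_mul_assoc)
  also have "\<dots> = A ** (B ** matpow A k)" by (simp add: assms matrix_mul_assoc)
  also have "\<dots> = matpow A (Suc k) ** B" by (simp add: Suc matrix_mul_assoc)
  finally show ?case .
qed

definition contraction :: "complex^'n::finite^'n \<Rightarrow> bool" where
  "contraction H \<longleftrightarrow> (\<forall>x. sqnorm (H *v x) \<le> sqnorm x)"

lemma contraction_matpow: assumes "contraction H" shows "sqnorm (matpow H k *v x) \<le> sqnorm x"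
proof (induction k)
  case 0 then show ?case by simp
next
  case (Suc k)
  have "sqnorm (matpow H (Suc k) *v x) = sqnorm (H *v (matpow H k *v x))" by (simp add: matrix_vector_mul_assoc)
  also have "\<dots> \<le> sqnorm (matpow H k *v x)" using assms by (simp add: contraction_def)
  finally show ?case using Suc by simp
qed

lemma sqnorm_axis: "sqnorm (axis j (1::complex)) = 1"
  by (simp add: sqnorm_def axis_def if_distrib[where f=cmod] if_distrib[where f="\<lambda>u. u^2"] cong: if_cong)

lemma component_le_sqnorm: "(cmod (x $ i))^2 \<le> sqnorm x"
  unfolding sqnorm_def by (rule member_le_sum) auto

lemma matrix_vector_mult_axis: "(A *v axis j 1) $ i = A $ i $ j"
  by (simp add: matrix_vector_mult_def axis_def if_distrib[where f="\<lambda>u. _ * u"] cong: if_cong)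

lemma contraction_entry: assumes "contraction H" shows "cmod (matpow H k $ i $ j) \<le> 1"
proof -
  have "(cmod (matpow H k $ i $ j))^2 \<le> 1"
    using component_le_sqnorm[of "matpow H k *v axis j 1" i] contraction_matpow[OF assms, of k "axis j 1"]
    by (simp add: matrix_vector_mult_axis sqnorm_axis)
  then show ?thesis by (simp add: power_le_one_iff abs_le_square_iff[symmetric])
qed

lemma contraction_matpow_sesq: assumes "contraction H" shows "cmod (sesq (matpow H k) x x) \<le> sqnorm x"
proof -
  have "(cmod (sesq (matpow H k) x x))^2 \<le> sqnorm x * sqnorm (matpow H k *v x)"
    using cauchy_schwarz_sqnorm[of x "matpow H k *v x"] by (simp add: sesq_mult_vec)
  also have "\<dots> \<le> sqnorm x * sqnorm x" using contraction_matpow[OF assms] sqnorm_nonneg by (intro mult_left_mono) auto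
  finally have "(cmod (sesq (matpow H k) x x))^2 \<le> (sqnorm x)^2" by (simp add: power2_eq_square)
  then show ?thesis using sqnorm_nonneg by (rule power2_le_imp_le)
qed

definition sqrt_series :: "complex^'n::finite^'n \<Rightarrow> complex^'n^'n" where
  "sqrt_series H = (\<chi> i j. \<Sum>k. complex_of_real (sqrt_coeff k) * matpow H k $ i $ j)"

lemma sqrt_series_summable_norm: assumes "contraction H"
  shows "summable (\<lambda>k. norm (complex_of_real (sqrt_coeff k) * matpow H k $ i $ j))"
proof (rule summable_comparison_test[OF _ sqrt_coeff_abs_summable])
  show "\<exists>N. \<forall>n\<ge>N. norm (norm (complex_of_real (sqrt_coeff n) * matpow H n $ i $ j)) \<le> \<bar>sqrt_coeff n\<bar>"
    using contraction_entry[OF assms] by (auto simp: norm_mult intro!: mult_left_le)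
qed

lemma sqrt_series_summable: "contraction H \<Longrightarrow> summable (\<lambda>k. complex_of_real (sqrt_coeff k) * matpow H k $ i $ j)"
  by (rule summable_norm_cancel) (rule sqrt_series_summable_norm)

lemma matpow_convolution_entry:
  "(\<Sum>m\<in>UNIV. \<Sum>k\<le>n. (complex_of_real (c k) * matpow H k $ i $ m) * (complex_of_real (d (n - k)) * matpow H (n - k) $ m $ j))
    = complex_of_real (\<Sum>k\<le>n. c k * d (n - k)) * matpow H n $ i $ j"
proof -
  have "(\<Sum>m\<in>UNIV. \<Sum>k\<le>n. (complex_of_real (c k) * matpow H k $ i $ m) * (complex_of_real (d (n - k)) * matpow H (n - k) $ m $ j))
      = (\<Sum>k\<le>n. complex_of_real (c k * d (n - k)) * (\<Sum>m\<in>UNIV. matpow H k $ i $ m * matpow H (n - k) $ m $ j))"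
    by (subst sum.swap) (simp add: sum_distrib_left mult_ac)
  also have "\<dots> = (\<Sum>k\<le>n. complex_of_real (c k * d (n - k)) * matpow H n $ i $ j)"
  proof (intro sum.cong refl)
    fix k assume "k \<in> {..n}"
    then show "complex_of_real (c k * d (n - k)) * (\<Sum>m\<in>UNIV. matpow H k $ i $ m * matpow H (n - k) $ m $ j)
        = complex_of_real (c k * d (n - k)) * matpow H n $ i $ j"
      using matpow_add[of H k "n - k"] by (simp add: matrix_matrix_mult_def)
  qed
  also have "\<dots> = complex_of_real (\<Sum>k\<le>n. c k * d (n - k)) * matpow H n $ i $ j"
    by (simp add: sum_distrib_right)
  finally show ?thesis .
qed
lemma sqrt_series_square: assumes c: "contraction H" shows "sqrt_series H ** sqrt_series H = mat 1 - H"
proof -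
  have "(sqrt_series H ** sqrt_series H) $ i $ j = (mat 1 - H) $ i $ j" for i j
  proof -
    define a where "a = (\<lambda>m k. complex_of_real (sqrt_coeff k) * matpow H k $ i $ m)"
    define b where "b = (\<lambda>m k. complex_of_real (sqrt_coeff k) * matpow H k $ m $ j)"
    define \<delta> where "\<delta> = (\<lambda>n::nat. if n = 0 then 1 else if n = 1 then -1 else 0 :: real)"
    have "(sqrt_series H ** sqrt_series H) $ i $ j = (\<Sum>m\<in>UNIV. suminf (a m) * suminf (b m))"
      by (simp add: matrix_matrix_mult_def sqrt_series_def a_def b_def)
    also have "\<dots> = (\<Sum>m\<in>UNIV. \<Sum>n. \<Sum>k\<le>n. a m k * b m (n - k))"
      by (intro sum.cong refl Cauchy_product) (simp_all add: a_def b_def sqrt_series_summable_norm[OF c])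
    also have "\<dots> = (\<Sum>n. \<Sum>m\<in>UNIV. \<Sum>k\<le>n. a m k * b m (n - k))"
    proof (rule suminf_sum[symmetric])
      fix m
      show "summable (\<lambda>n. \<Sum>k\<le>n. a m k * b m (n - k))"
        using Cauchy_product_sums[of "a m" "b m"] by (auto simp: a_def b_def sqrt_series_summable_norm[OF c] sums_summable)
    qed
    also have "\<dots> = (\<Sum>n. complex_of_real (\<delta> n) * matpow H n $ i $ j)"
      unfolding a_def b_def matpow_convolution_entry by (simp add: sqrt_coeff_convolution \<delta>_def)
    also have "\<dots> = (\<Sum>n\<in>{0,1}. complex_of_real (\<delta> n) * matpow H n $ i $ j)"
      by (rule suminf_finite) (auto simp: \<delta>_def)
    also have "\<dots> = (mat 1 - H) $ i $ j" by (simp add: \<delta>_def)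
    finally show ?thesis .
  qed
  then show ?thesis by (simp add: vec_eq_iff)
qed

lemma sum_mult_suminf:
  fixes f :: "'a \<Rightarrow> nat \<Rightarrow> complex"
  assumes "finite I" "\<And>m. summable (f m)"
  shows "(\<Sum>m\<in>I. c m * suminf (f m)) = (\<Sum>k. \<Sum>m\<in>I. c m * f m k)"
proof -
  have "(\<Sum>m\<in>I. c m * suminf (f m)) = (\<Sum>m\<in>I. \<Sum>k. c m * f m k)"
    by (intro sum.cong refl) (simp add: suminf_mult assms)
  also have "\<dots> = (\<Sum>k. \<Sum>m\<in>I. c m * f m k)"
    by (rule suminf_sum[symmetric]) (simp add: summable_mult assms)
  finally show ?thesis .
qed

lemma sum_sum_mult_suminf:
  fixes f :: "'a \<Rightarrow> 'b \<Rightarrow> nat \<Rightarrow> complex"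
  assumes "finite I" "finite J" "\<And>i j. summable (f i j)"
  shows "(\<Sum>i\<in>I. \<Sum>j\<in>J. c i j * suminf (f i j)) = (\<Sum>k. \<Sum>i\<in>I. \<Sum>j\<in>J. c i j * f i j k)"
proof -
  have "(\<Sum>i\<in>I. \<Sum>j\<in>J. c i j * suminf (f i j)) = (\<Sum>i\<in>I. \<Sum>k. \<Sum>j\<in>J. c i j * f i j k)"
    by (intro sum.cong refl sum_mult_suminf assms)
  also have "\<dots> = (\<Sum>k. \<Sum>i\<in>I. \<Sum>j\<in>J. c i j * f i j k)"
    by (rule suminf_sum[symmetric]) (intro summable_sum summable_mult assms)
  finally show ?thesis .
qed

lemma sesq_sqrt_series: assumes "contraction H"
  shows "sesq (sqrt_series H) x x = (\<Sum>k. complex_of_real (sqrt_coeff k) * sesq (matpow H k) x x)"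
proof -
  have "sesq (sqrt_series H) x x = (\<Sum>i\<in>UNIV. \<Sum>j\<in>UNIV. (cnj (x$i) * x$j) * (\<Sum>k. complex_of_real (sqrt_coeff k) * matpow H k $ i $ j))"
    by (simp add: sesq_def sqrt_series_def mult_ac)
  also have "\<dots> = (\<Sum>k. \<Sum>i\<in>UNIV. \<Sum>j\<in>UNIV. (cnj (x$i) * x$j) * (complex_of_real (sqrt_coeff k) * matpow H k $ i $ j))"
    by (rule sum_sum_mult_suminf) (simp_all add: sqrt_series_summable[OF assms])
  also have "\<dots> = (\<Sum>k. complex_of_real (sqrt_coeff k) * sesq (matpow H k) x x)"
    by (simp add: sesq_def sum_distrib_left mult_ac)
  finally show ?thesis .
qed

lemma psd_sqrt_series: assumes h: "hermitian H" and c: "contraction H" shows "psd (sqrt_series H)"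
  unfolding psd_iff_sesq
proof
  fix x
  define t where "t = (\<lambda>k. complex_of_real (sqrt_coeff k) * sesq (matpow H k) x x)"
  have summable_t: "summable t"
  proof (rule summable_norm_cancel, rule summable_comparison_test[OF _ summable_mult2[OF sqrt_coeff_abs_summable, of "sqnorm x"]])
    show "\<exists>N. \<forall>n\<ge>N. norm (norm (t n)) \<le> \<bar>sqrt_coeff n\<bar> * sqnorm x"
      using contraction_matpow_sesq[OF c] by (auto simp: t_def norm_mult intro!: mult_left_mono)
  qed
  have series: "sesq (sqrt_series H) x x = suminf t" unfolding t_def by (rule sesq_sqrt_series[OF c])
  have "Im (suminf t) = (\<Sum>k. Im (t k))" using summable_t by (rule Im_suminf)
  also have "\<dots> = 0" using hermitian_sesq_real[OF hermitian_matpow[OF h]] by (simp add: t_def)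
  finally have real: "Im (sesq (sqrt_series H) x x) = 0" using series by simp
  have "Re (suminf t) = (\<Sum>k. Re (t k))" using summable_t by (rule Re_suminf)
  also have "\<dots> \<ge> (\<Sum>k. sqrt_coeff k * sqnorm x)"
  proof (rule suminf_le)
    fix k
    show "sqrt_coeff k * sqnorm x \<le> Re (t k)"
    proof (cases "k = 0")
      case True then show ?thesis by (simp add: t_def sqrt_coeff_0 sesq_id_diag)
    next
      case False
      then have coeff_nonpos: "sqrt_coeff k \<le> 0" by (intro sqrt_coeff_neg) simp
      have "Re (sesq (matpow H k) x x) \<le> sqnorm x"
        using contraction_matpow_sesq[OF c, of k x] complex_Re_le_cmod[of "sesq (matpow H k) x x"] by linarith
      then show ?thesis using coeff_nonpos by (simp add: t_def mult_left_mono_neg)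
    qed
  next
    show "summable (\<lambda>k. sqrt_coeff k * sqnorm x)" by (rule summable_mult2[OF sqrt_coeff_summable])
  next
    show "summable (\<lambda>k. Re (t k))" using summable_t by (rule summable_Re)
  qed
  finally have "Re (sesq (sqrt_series H) x x) \<ge> (\<Sum>k. sqrt_coeff k * sqnorm x)" using series by simp
  moreover have "(\<Sum>k. sqrt_coeff k * sqnorm x) = suminf sqrt_coeff * sqnorm x" by (rule suminf_mult2[OF sqrt_coeff_summable, symmetric])
  moreover have "suminf sqrt_coeff * sqnorm x \<ge> 0" using sqrt_coeff_suminf_nonneg sqnorm_nonneg[of x] by (rule mult_nonneg_nonneg)
  ultimately show "Im (sesq (sqrt_series H) x x) = 0 \<and> 0 \<le> Re (sesq (sqrt_series H) x x)" using real by simp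
qed

lemma sqrt_series_commute: assumes c: "contraction H" and bc: "B ** H = H ** B" shows "B ** sqrt_series H = sqrt_series H ** B"
proof -
  have "(B ** sqrt_series H) $ i $ j = (sqrt_series H ** B) $ i $ j" for i j
  proof -
    have "(B ** sqrt_series H) $ i $ j = (\<Sum>m\<in>UNIV. B $ i $ m * (\<Sum>k. complex_of_real (sqrt_coeff k) * matpow H k $ m $ j))"
      by (simp add: matrix_matrix_mult_def sqrt_series_def)
    also have "\<dots> = (\<Sum>k. \<Sum>m\<in>UNIV. B $ i $ m * (complex_of_real (sqrt_coeff k) * matpow H k $ m $ j))"
      by (rule sum_mult_suminf) (simp_all add: sqrt_series_summable[OF c])
    also have "\<dots> = (\<Sum>k. complex_of_real (sqrt_coeff k) * (B ** matpow H k) $ i $ j)"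
      by (simp add: matrix_matrix_mult_def sum_distrib_left mult_ac)
    also have "\<dots> = (\<Sum>k. complex_of_real (sqrt_coeff k) * (matpow H k ** B) $ i $ j)"
      by (simp add: comm_matpow[OF bc])
    also have "\<dots> = (\<Sum>k. \<Sum>m\<in>UNIV. B $ m $ j * (complex_of_real (sqrt_coeff k) * matpow H k $ i $ m))"
      by (simp add: matrix_matrix_mult_def sum_distrib_left mult_ac)
    also have "\<dots> = (\<Sum>m\<in>UNIV. B $ m $ j * (\<Sum>k. complex_of_real (sqrt_coeff k) * matpow H k $ i $ m))"
      by (rule sum_mult_suminf[symmetric]) (simp_all add: sqrt_series_summable[OF c])
    also have "\<dots> = (sqrt_series H ** B) $ i $ j"
      by (simp add: matrix_matrix_mult_def sqrt_series_def mult_ac)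
    finally show ?thesis .
  qed
  then show ?thesis by (simp add: vec_eq_iff)
qed

lemma sesq_scaleR: "sesq (r *\<^sub>R A) x y = r *\<^sub>R sesq A x y"
  by (simp add: sesq_def scaleR_sum_right)

lemma hermitian_scaleR: "hermitian A \<Longrightarrow> hermitian (r *\<^sub>R A)"
  by (simp add: hermitian_iff_adjoint adjoint_def vec_eq_iff)

lemma hermitian_mat_1: "hermitian (mat 1 :: complex^'n::finite^'n)"
  by (simp add: hermitian_iff_adjoint adjoint_mat_1)

lemma component_mult_le_sqnorm: "cmod (y $ i) * cmod (y $ j) \<le> sqnorm y"
proof -
  have "(cmod (y $ i) * cmod (y $ j))^2 = (cmod (y $ i))^2 * (cmod (y $ j))^2" by (simp add: power_mult_distrib)
  also have "\<dots> \<le> sqnorm y * sqnorm y" using component_le_sqnorm[of y i] component_le_sqnorm[of y j] sqnorm_nonneg[of y] by (intro mult_mono) auto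
  finally have "(cmod (y $ i) * cmod (y $ j))^2 \<le> (sqnorm y)^2" by (simp add: power2_eq_square)
  then show ?thesis using sqnorm_nonneg by (rule power2_le_imp_le)
qed

lemma sesq_le_entry_sum: "cmod (sesq M y y) \<le> (\<Sum>i\<in>UNIV. \<Sum>j\<in>UNIV. cmod (M $ i $ j)) * sqnorm y"
proof -
  have "cmod (sesq M y y) \<le> (\<Sum>i\<in>UNIV. cmod (\<Sum>j\<in>UNIV. cnj (y $ i) * M $ i $ j * y $ j))"
    unfolding sesq_def by (rule norm_sum)
  also have "\<dots> \<le> (\<Sum>i\<in>UNIV. \<Sum>j\<in>UNIV. cmod (cnj (y $ i) * M $ i $ j * y $ j))"
    by (intro sum_mono norm_sum)
  also have "\<dots> \<le> (\<Sum>i\<in>UNIV. \<Sum>j\<in>UNIV. cmod (M $ i $ j) * sqnorm y)"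
  proof (intro sum_mono)
    fix i j
    have "cmod (cnj (y $ i) * M $ i $ j * y $ j) = cmod (M $ i $ j) * (cmod (y $ i) * cmod (y $ j))"
      by (simp add: norm_mult)
    also have "\<dots> \<le> cmod (M $ i $ j) * sqnorm y" by (intro mult_left_mono component_mult_le_sqnorm) auto
    finally show "cmod (cnj (y $ i) * M $ i $ j * y $ j) \<le> cmod (M $ i $ j) * sqnorm y" .
  qed
  also have "\<dots> = (\<Sum>i\<in>UNIV. \<Sum>j\<in>UNIV. cmod (M $ i $ j)) * sqnorm y" by (simp add: sum_distrib_right)
  finally show ?thesis .
qed

lemma contraction_if_psd_le_id:
  assumes H: "psd H" and le: "\<And>y. Re (sesq H y y) \<le> sqnorm y"
  shows "contraction H"
  unfolding contraction_def
proof
  fix x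
  define y where "y = H *v x"
  have "sesq H y x = sesq (mat 1) y y" by (simp add: sesq_mult_vec y_def)
  then have "(sqnorm y)^2 \<le> Re (sesq H y y) * Re (sesq H x x)"
    using psd_cauchy_schwarz[OF H, of y x] by (simp add: sesq_id_diag)
  also have "\<dots> \<le> sqnorm y * sqnorm x"
    using le[of y] le[of x] H by (intro mult_mono) (auto simp: psd_iff_sesq sqnorm_nonneg)
  finally have "sqnorm y * sqnorm y \<le> sqnorm y * sqnorm x" by (simp add: power2_eq_square)
  then show "sqnorm (H *v x) \<le> sqnorm x" unfolding y_def[symmetric]
    using sqnorm_nonneg[of y] by (cases "sqnorm y = 0") (auto simp: sqnorm_nonneg)
qed

text \<open>With \<open>H = I - M/c\<close> a contraction, \<open>\<surd>c \<cdot> \<surd>(I - H)\<close> is given by a convergent binomial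
  series in \<open>H\<close>, and so commutes with every matrix that commutes with \<open>M\<close>.\<close>
lemma psd_sqrt_exists:
  assumes M: "psd M"
  shows "\<exists>R. psd R \<and> R ** R = M \<and> (\<forall>B. B ** M = M ** B \<longrightarrow> B ** R = R ** B)"
proof -
  define c where "c = 1 + (\<Sum>i\<in>UNIV. \<Sum>j\<in>UNIV. cmod (M $ i $ j))"
  have c0: "c > 0" unfolding c_def by (simp add: add_pos_nonneg sum_nonneg)
  define H where "H = mat 1 - (1/c) *\<^sub>R M"
  have hH: "hermitian H"
    unfolding H_def by (intro hermitian_diff hermitian_mat_1 hermitian_scaleR psd_imp_hermitian M)
  have ReH: "Re (sesq H y y) = sqnorm y - Re (sesq M y y) / c" for y
    by (simp add: H_def sesq_diff sesq_scaleR sesq_id_diag)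
  have "Re (sesq M y y) \<le> c * sqnorm y" for y
    using sesq_le_entry_sum[of M y] complex_Re_le_cmod[of "sesq M y y"] sqnorm_nonneg[of y]
    by (simp add: c_def algebra_simps)
  then have "psd H"
    using c0 hermitian_sesq_real[OF hH] by (simp add: psd_iff_sesq ReH divide_le_eq mult.commute)
  moreover have "Re (sesq H y y) \<le> sqnorm y" for y
    using M c0 by (simp add: ReH psd_iff_sesq)
  ultimately have cH: "contraction H" by (rule contraction_if_psd_le_id)
  define R where "R = sqrt c *\<^sub>R sqrt_series H"
  have pR: "psd R"
    using psd_sqrt_series[OF hH cH] c0 by (simp add: R_def psd_iff_sesq sesq_scaleR)
  have RR: "R ** R = M"
  proof -
    have "R ** R = (sqrt c * sqrt c) *\<^sub>R (sqrt_series H ** sqrt_series H)" by (simp add: R_def matrix_scalar_ac scalar_matrix_assoc[symmetric])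
    also have "\<dots> = c *\<^sub>R (mat 1 - H)" using c0 by (simp add: sqrt_series_square[OF cH])
    also have "\<dots> = M" using c0 by (simp add: H_def)
    finally show ?thesis .
  qed
  have cR: "B ** R = R ** B" if "B ** M = M ** B" for B
  proof -
    have "B ** H = H ** B" using that
      by (simp add: H_def matrix_mul_diff_left matrix_mul_diff_right matrix_scalar_ac scalar_matrix_assoc[symmetric])
    then have "B ** sqrt_series H = sqrt_series H ** B" by (rule sqrt_series_commute[OF cH])
    then show ?thesis by (simp add: R_def matrix_scalar_ac scalar_matrix_assoc[symmetric])
  qed
  show ?thesis using pR RR cR by blast
qed

lemma msqrt_eqI: assumes M: "psd M" and B: "psd B" and BB: "B ** B = M" shows "msqrt M = B"
proof -
  obtain R where R: "psd R" "R ** R = M" "\<And>B. B ** M = M ** B \<Longrightarrow> B ** R = R ** B"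
    using psd_sqrt_exists[OF M] by blast
  have uniq: "X = R" if X: "psd X" "X ** X = M" for X
  proof -
    have "X ** (X ** X) = (X ** X) ** X" by (rule matrix_mul_assoc)
    then have "X ** M = M ** X" by (simp only: X(2))
    then have "X ** R = R ** X" by (rule R(3))
    then show "X = R" by (rule psd_sqrt_unique_if_commute[OF X(1) R(1)]) (simp only: X(2) R(2))
  qed
  have "msqrt M = R" unfolding msqrt_def
  proof (rule the_equality)
    show "psd R \<and> R ** R = M" using R(1,2) by simp
  next
    fix X assume "psd X \<and> X ** X = M" then show "X = R" using uniq by blast
  qed
  moreover have "B = R" using uniq[OF B BB] .
  ultimately show ?thesis by simp
qed

lemma psd_msqrt: assumes "psd M" shows "psd (msqrt M)" "msqrt M ** msqrt M = M"
proof -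
  obtain R where R: "psd R" "R ** R = M" using psd_sqrt_exists[OF assms] by blast
  have "msqrt M = R" by (rule msqrt_eqI[OF assms R])
  then show "psd (msqrt M)" "msqrt M ** msqrt M = M" using R by simp_all
qed

section \<open>A lower bound for the trace of a square root\<close>

lemma sesq_id_axis: "sesq (mat 1) (axis k 1) v = v $ k"
  by (simp add: sesq_mult_vec axis_def if_distrib[where f=cnj] if_distrib[where f="\<lambda>u. u * _"] cong: if_cong)

lemma positive_definite_inverse:
  fixes A :: "complex^'n::finite^'n"
  assumes hA: "hermitian A" and e: "\<epsilon> > 0" and pd: "\<And>x. Re (sesq A x x) \<ge> \<epsilon> * sqnorm x"
  obtains Y where "A ** Y = mat 1" "Y ** A = mat 1" "hermitian Y"
proof -
  have "A *v x = 0 \<Longrightarrow> x = 0" for x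
  proof -
    assume "A *v x = 0"
    then have "\<epsilon> * sqnorm x \<le> 0" using pd[of x] by (simp add: sesq_mult_vec)
    then show "x = 0" using e sqnorm_nonneg[of x] by (intro sqnorm_zero) (simp add: mult_le_0_iff)
  qed
  then obtain Y where YA: "Y ** A = mat 1" using matrix_left_invertible_ker[of A] by blast
  then have AY: "A ** Y = mat 1" using matrix_left_right_inverse by blast
  have "adjoint Y ** A = mat 1"
    using arg_cong[OF AY, of adjoint] hA by (simp add: adjoint_mult hermitian_iff_adjoint adjoint_mat_1)
  then have "adjoint Y = Y"
    by (metis AY matrix_mul_assoc matrix_mul_lid matrix_mul_rid)
  then show ?thesis using that AY YA by (simp add: hermitian_iff_adjoint)
qed

lemma sesq_inverse:
  assumes "hermitian Y" and "A ** Y = mat 1"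
  shows "sesq Y x x = sesq A (Y *v x) (Y *v x)"
proof -
  have "sesq Y x x = sesq (Y ** (A ** Y)) x x" using assms(2) by simp
  also have "\<dots> = sesq A (Y *v x) (Y *v x)"
    by (subst sesq_mult_hermitian_left[OF assms(1)]) (rule sesq_mult_right)
  finally show ?thesis .
qed

lemma inverse_diag_le:
  assumes pd: "\<And>x. Re (sesq A x x) \<ge> \<epsilon> * sqnorm x" and e: "\<epsilon> > 0"
    and hY: "hermitian Y" and AY: "A ** Y = mat 1"
  shows "Re (Y $ k $ k) \<le> 1 / \<epsilon>"
proof -
  define w where "w = Y *v axis k 1"
  define t where "t = Re (Y $ k $ k)"
  have wk: "w $ k = Y $ k $ k" by (simp add: w_def matrix_vector_mult_axis)
  have "t = Re (sesq A w w)"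
    using sesq_inverse[OF hY AY, of "axis k 1"] by (simp add: t_def w_def sesq_axis)
  then have lower: "\<epsilon> * sqnorm w \<le> t" using pd by simp
  have "t^2 \<le> (cmod (w $ k))^2" unfolding t_def wk using abs_Re_le_cmod[of "Y $ k $ k"]
    by (simp add: abs_le_square_iff[symmetric])
  also have "\<dots> \<le> sqnorm w" by (rule component_le_sqnorm)
  finally have "\<epsilon> * t^2 \<le> t" using lower e by (meson mult_left_mono order_trans less_imp_le)
  moreover have "t \<ge> 0" using lower e sqnorm_nonneg[of w] by (meson mult_nonneg_nonneg order_trans less_imp_le)
  ultimately show ?thesis unfolding t_def[symmetric]
    using e by (cases "t = 0") (auto simp: power2_eq_square field_simps)
qed

lemma mtrace_add: "mtrace (A + B) = mtrace A + mtrace B"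
  by (simp add: mtrace_def sum.distrib)
lemma mtrace_diff: "mtrace (A - B) = mtrace A - mtrace B"
  by (simp add: mtrace_def sum_subtractf)
lemma mtrace_scaleR: "mtrace (r *\<^sub>R A) = r *\<^sub>R mtrace A"
  by (simp add: mtrace_def scaleR_sum_right)
lemma mtrace_id: "mtrace (mat 1 :: complex^'n::finite^'n) = of_nat CARD('n)"
  by (simp add: mtrace_def mat_def)

lemma of_real_cmod_square: "(complex_of_real (cmod z))^2 = z * cnj z"
  using complex_norm_square[of z] by simp

definition gram :: "('n::finite \<Rightarrow> real) \<Rightarrow> ('n \<Rightarrow> complex^'n) \<Rightarrow> complex^'n^'n" where
  "gram z a = (\<chi> k l. \<Sum>j\<in>UNIV. complex_of_real (z j) * a j $ k * cnj (a j $ l))"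

lemma psd_gram: assumes "\<And>j. z j \<ge> 0" shows "psd (gram z a)"
proof -
  have "sesq (gram z a) x x = complex_of_real (\<Sum>j\<in>UNIV. z j * (cmod (\<Sum>k\<in>UNIV. cnj (x $ k) * a j $ k))^2)" for x
  proof -
    define w where "w j = (\<Sum>k\<in>UNIV. cnj (x $ k) * a j $ k)" for j
    have "sesq (gram z a) x x = (\<Sum>k\<in>UNIV. \<Sum>l\<in>UNIV. \<Sum>j\<in>UNIV. complex_of_real (z j) * (cnj (x $ k) * a j $ k) * (cnj (a j $ l) * x $ l))"
      by (simp add: sesq_def gram_def sum_distrib_left sum_distrib_right mult_ac)
    also have "\<dots> = (\<Sum>j\<in>UNIV. \<Sum>l\<in>UNIV. \<Sum>k\<in>UNIV. complex_of_real (z j) * (cnj (x $ k) * a j $ k) * (cnj (a j $ l) * x $ l))"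
      by (rule sum_swap3)
    also have "\<dots> = (\<Sum>j\<in>UNIV. complex_of_real (z j) * (w j * cnj (w j)))"
    proof (rule sum.cong[OF refl])
      fix j
      have "cnj (w j) = (\<Sum>l\<in>UNIV. cnj (a j $ l) * x $ l)" by (simp add: w_def mult.commute)
      then have "complex_of_real (z j) * (w j * cnj (w j)) = (\<Sum>k\<in>UNIV. \<Sum>l\<in>UNIV. complex_of_real (z j) * (cnj (x $ k) * a j $ k) * (cnj (a j $ l) * x $ l))"
        by (simp add: w_def sum_product sum_distrib_left mult_ac)
      also have "\<dots> = (\<Sum>l\<in>UNIV. \<Sum>k\<in>UNIV. complex_of_real (z j) * (cnj (x $ k) * a j $ k) * (cnj (a j $ l) * x $ l))"
        by (rule sum.swap)
      finally show "(\<Sum>l\<in>UNIV. \<Sum>k\<in>UNIV. complex_of_real (z j) * (cnj (x $ k) * a j $ k) * (cnj (a j $ l) * x $ l)) = complex_of_real (z j) * (w j * cnj (w j))" by simp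
    qed
    also have "\<dots> = complex_of_real (\<Sum>j\<in>UNIV. z j * (cmod (w j))^2)"
      by (simp add: of_real_cmod_square)
    finally show ?thesis by (simp add: w_def)
  qed
  then show ?thesis using assms by (simp add: psd_iff_sesq sum_nonneg)
qed

definition outer :: "complex^'n::finite \<Rightarrow> complex^'n^'n" where
  "outer v = (\<chi> k l. v $ k * cnj (v $ l))"

lemma gram_indicator: "gram (\<lambda>j. if j = j0 then 1 else 0) a = outer (a j0)"
  by (simp add: gram_def outer_def vec_eq_iff if_distrib[where f=complex_of_real] if_distrib[where f="\<lambda>u. u * _"] cong: if_cong)

lemma trace_mult_gram:
  "mtrace (Y ** gram z a) = (\<Sum>j\<in>UNIV. complex_of_real (z j) * sesq Y (a j) (a j))"
proof -
  have "(\<Sum>j\<in>UNIV. complex_of_real (z j) * sesq Y (a j) (a j))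
      = (\<Sum>j\<in>UNIV. \<Sum>i\<in>UNIV. \<Sum>l\<in>UNIV. Y $ i $ l * (complex_of_real (z j) * a j $ l * cnj (a j $ i)))"
    by (simp add: sesq_def sum_distrib_left mult_ac)
  also have "\<dots> = (\<Sum>i\<in>UNIV. \<Sum>j\<in>UNIV. \<Sum>l\<in>UNIV. Y $ i $ l * (complex_of_real (z j) * a j $ l * cnj (a j $ i)))"
    by (rule sum.swap)
  also have "\<dots> = (\<Sum>i\<in>UNIV. \<Sum>l\<in>UNIV. \<Sum>j\<in>UNIV. Y $ i $ l * (complex_of_real (z j) * a j $ l * cnj (a j $ i)))"
    by (rule sum.cong[OF refl], rule sum.swap)
  also have "\<dots> = mtrace (Y ** gram z a)"
    by (simp add: mtrace_def matrix_matrix_mult_def gram_def sum_distrib_left)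
  finally show ?thesis by simp
qed

lemma entry_sq_le_diag_mult_sesq_inverse:
  assumes "hermitian A" and "A ** Y = mat 1" and "psd Y"
  shows "(cmod (v $ k))^2 \<le> Re (A $ k $ k) * Re (sesq Y v v)"
proof -
  have "sesq Y (A *v axis k 1) v = v $ k"
    using sesq_mult_hermitian_left[OF assms(1), of Y "axis k 1" v] assms(2) by (simp add: sesq_id_axis)
  moreover have "sesq Y (A *v axis k 1) (A *v axis k 1) = A $ k $ k"
    using sesq_mult_hermitian_left[OF assms(1), of Y "axis k 1" "A *v axis k 1"] assms(2)
    by (simp add: sesq_id_axis matrix_vector_mult_axis)
  ultimately show ?thesis
    using psd_cauchy_schwarz[OF assms(3), of "A *v axis k 1" v] by (simp add: mult.commute)
qed

lemma weighted_sqrt_sum_le_mean_trace: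
  fixes A Y :: "complex^'n::finite^'n" and a :: "'n \<Rightarrow> complex^'n"
    and z f :: "'n \<Rightarrow> real" and r :: "'n \<Rightarrow> 'n \<Rightarrow> real"
  assumes A: "psd A" and AY: "A ** Y = mat 1" and Y: "psd Y"
    and z0: "\<And>j. z j \<ge> 0" and r0: "\<And>j k. r j k \<ge> 0" and col_le: "\<And>k. (\<Sum>j\<in>UNIV. z j * r j k) \<le> 1"
    and f_le: "\<And>j. z j > 0 \<Longrightarrow> f j \<le> (\<Sum>k\<in>UNIV. r j k * (cmod (a j $ k))^2)"
  shows "(\<Sum>j\<in>UNIV. z j * sqrt (f j)) \<le> (Re (mtrace A) + Re (mtrace (Y ** gram z a))) / 2"
proof -
  define T where "T j = (\<Sum>k\<in>UNIV. r j k * Re (A $ k $ k))" for j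
  define c where "c j = Re (sesq Y (a j) (a j))" for j
  have Akk: "Re (A $ k $ k) \<ge> 0" for k
    using A[unfolded psd_iff_sesq, rule_format, of "axis k 1"] by (simp add: sesq_axis)
  have c0: "c j \<ge> 0" for j using Y by (simp add: c_def psd_iff_sesq)
  have T0: "T j \<ge> 0" for j unfolding T_def using r0 Akk by (intro sum_nonneg mult_nonneg_nonneg)
  have "z j * sqrt (f j) \<le> z j * ((T j + c j) / 2)" for j
  proof (cases "z j > 0")
    case False then show ?thesis using z0[of j] by simp
  next
    case True
    have "f j \<le> (\<Sum>k\<in>UNIV. r j k * (cmod (a j $ k))^2)" by (rule f_le[OF True])
    also have "\<dots> \<le> (\<Sum>k\<in>UNIV. r j k * (Re (A $ k $ k) * c j))"
      unfolding c_def using r0 entry_sq_le_diag_mult_sesq_inverse[OF psd_imp_hermitian[OF A] AY Y]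
      by (intro sum_mono mult_left_mono) auto
    also have "\<dots> = T j * c j" by (simp add: T_def sum_distrib_right sum_distrib_left mult_ac)
    finally have "sqrt (f j) \<le> sqrt (T j * c j)" by simp
    also have "\<dots> \<le> (T j + c j) / 2" using T0 c0 by (rule arith_geo_mean_sqrt)
    finally show ?thesis using z0[of j] by (intro mult_left_mono) auto
  qed
  then have "(\<Sum>j\<in>UNIV. z j * sqrt (f j)) \<le> ((\<Sum>j\<in>UNIV. z j * T j) + (\<Sum>j\<in>UNIV. z j * c j)) / 2"
    by (simp add: sum_mono sum_divide_distrib sum.distrib[symmetric] distrib_left)
  moreover have "(\<Sum>j\<in>UNIV. z j * T j) = (\<Sum>k\<in>UNIV. (\<Sum>j\<in>UNIV. z j * r j k) * Re (A $ k $ k))"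
    unfolding T_def by (simp add: sum_distrib_left sum_distrib_right mult_ac) (rule sum.swap)
  moreover have "\<dots> \<le> Re (mtrace A)"
    unfolding mtrace_def Re_sum
    by (intro sum_mono mult_left_le_one_le Akk col_le sum_nonneg mult_nonneg_nonneg z0 r0)
  moreover have "(\<Sum>j\<in>UNIV. z j * c j) = Re (mtrace (Y ** gram z a))"
    by (simp add: trace_mult_gram c_def)
  ultimately show ?thesis by argo
qed

lemma trace_shifted_inverse_mult_square_le:
  fixes X Y :: "complex^'n::finite^'n"
  assumes eps: "\<epsilon> > 0" and YA: "Y ** (X + \<epsilon> *\<^sub>R mat 1) = mat 1"
    and Ybd: "\<And>k. Re (Y $ k $ k) \<le> 1 / \<epsilon>"
  shows "Re (mtrace (Y ** (X ** X))) \<le> Re (mtrace X)"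
proof -
  define N where "N = real CARD('n)"
  have YX: "Y ** X = mat 1 - \<epsilon> *\<^sub>R Y"
    using YA by (simp add: matrix_add_ldistrib matrix_scalar_ac eq_diff_eq)
  have "Y ** (X ** X) = X - \<epsilon> *\<^sub>R mat 1 + (\<epsilon> * \<epsilon>) *\<^sub>R Y"
    by (simp add: matrix_mul_assoc YX matrix_mul_diff_right scalar_matrix_assoc[symmetric] algebra_simps)
  then have "Re (mtrace (Y ** (X ** X))) = Re (mtrace X) - \<epsilon> * N + \<epsilon> * \<epsilon> * Re (mtrace Y)"
    by (simp add: mtrace_add mtrace_diff mtrace_scaleR mtrace_id N_def)
  moreover have "Re (mtrace Y) \<le> N / \<epsilon>"
    using sum_mono[of UNIV "\<lambda>k. Re (Y $ k $ k)" "\<lambda>_. 1 / \<epsilon>", OF Ybd]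
    by (simp add: mtrace_def N_def)
  then have "\<epsilon> * \<epsilon> * Re (mtrace Y) \<le> \<epsilon> * N"
    using eps mult_left_mono[of _ _ "\<epsilon> * \<epsilon>"] by (simp add: field_simps)
  ultimately show ?thesis by linarith
qed

lemma weighted_sqrt_sum_le_trace_sqrt:
  fixes X :: "complex^'n::finite^'n" and a :: "'n \<Rightarrow> complex^'n"
    and z f :: "'n \<Rightarrow> real" and r :: "'n \<Rightarrow> 'n \<Rightarrow> real"
  assumes X: "psd X" and XX: "X ** X = gram z a"
    and z0: "\<And>j. z j \<ge> 0" and r0: "\<And>j k. r j k \<ge> 0" and col_le: "\<And>k. (\<Sum>j\<in>UNIV. z j * r j k) \<le> 1"
    and f_le: "\<And>j. z j > 0 \<Longrightarrow> f j \<le> (\<Sum>k\<in>UNIV. r j k * (cmod (a j $ k))^2)"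
  shows "(\<Sum>j\<in>UNIV. z j * sqrt (f j)) \<le> Re (mtrace X)"
proof (rule field_le_epsilon)
  fix e :: real assume "e > 0"
  define N where "N = real CARD('n)"
  define \<epsilon> where "\<epsilon> = 2 * e / N"
  have eps: "\<epsilon> > 0" using \<open>e > 0\<close> by (simp add: \<epsilon>_def N_def)
  define A where "A = X + \<epsilon> *\<^sub>R mat 1"
  have hA: "hermitian A"
    unfolding A_def by (intro hermitian_add psd_imp_hermitian[OF X] hermitian_scaleR hermitian_mat_1)
  have pd: "Re (sesq A x x) \<ge> \<epsilon> * sqnorm x" for x
    using X by (simp add: A_def sesq_add sesq_scaleR sesq_id_diag psd_iff_sesq)
  have A: "psd A" unfolding psd_iff_sesq using hermitian_sesq_real[OF hA] pd eps sqnorm_nonneg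
    by (metis mult_nonneg_nonneg order_less_imp_le order_trans)
  obtain Y where AY: "A ** Y = mat 1" and YA: "Y ** A = mat 1" and hY: "hermitian Y"
    using positive_definite_inverse[OF hA eps pd] by blast
  have Y: "psd Y" using A by (simp add: psd_iff_sesq sesq_inverse[OF hY AY])
  have "(\<Sum>j\<in>UNIV. z j * sqrt (f j)) \<le> (Re (mtrace A) + Re (mtrace (Y ** gram z a))) / 2"
    by (rule weighted_sqrt_sum_le_mean_trace[OF A AY Y z0 r0 col_le f_le])
  moreover have "Re (mtrace A) = Re (mtrace X) + \<epsilon> * N"
    by (simp add: A_def mtrace_add mtrace_scaleR mtrace_id N_def)
  moreover have "Re (mtrace (Y ** gram z a)) \<le> Re (mtrace X)"
    unfolding XX[symmetric] using YA inverse_diag_le[OF pd eps hY AY]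
    by (intro trace_shifted_inverse_mult_square_le[OF eps]) (simp_all add: A_def)
  moreover have "\<epsilon> * N = 2 * e" by (simp add: \<epsilon>_def N_def)
  ultimately show "(\<Sum>j\<in>UNIV. z j * sqrt (f j)) \<le> Re (mtrace X) + e" by argo
qed

section \<open>Nonnegativity of the classical transition probabilities\<close>

definition entry_abs_sum :: "real^'n::finite^'n \<Rightarrow> real" where
  "entry_abs_sum A = (\<Sum>i\<in>UNIV. \<Sum>j\<in>UNIV. \<bar>A $ i $ j\<bar>)"

lemma entry_abs_sum_nonneg: "entry_abs_sum A \<ge> 0" unfolding entry_abs_sum_def by (intro sum_nonneg) auto

lemma matpow_entry_abs_le: "\<bar>matpow A k $ i $ j\<bar> \<le> entry_abs_sum A ^ k"
proof (induction k arbitrary: i j)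
  case 0 then show ?case by (simp add: mat_def)
next
  case (Suc k)
  have "\<bar>matpow A (Suc k) $ i $ j\<bar> = \<bar>\<Sum>m\<in>UNIV. A $ i $ m * matpow A k $ m $ j\<bar>"
    by (simp add: matrix_matrix_mult_def)
  also have "\<dots> \<le> (\<Sum>m\<in>UNIV. \<bar>A $ i $ m\<bar> * entry_abs_sum A ^ k)"
    by (rule order_trans[OF sum_abs]) (auto intro!: sum_mono mult_left_mono simp: abs_mult Suc)
  also have "\<dots> \<le> (\<Sum>i'\<in>UNIV. \<Sum>m\<in>UNIV. \<bar>A $ i' $ m\<bar> * entry_abs_sum A ^ k)"
    by (rule member_le_sum[of i]) (auto intro!: sum_nonneg mult_nonneg_nonneg zero_le_power entry_abs_sum_nonneg)
  also have "\<dots> = entry_abs_sum A ^ Suc k" by (simp add: entry_abs_sum_def sum_distrib_right)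
  finally show ?case .
qed

lemma matpow_entry_nonneg: assumes "\<And>i j. A $ i $ j \<ge> (0::real)" shows "matpow A k $ i $ j \<ge> 0"
proof (induction k arbitrary: i j)
  case 0 then show ?case by (simp add: mat_def)
next
  case (Suc k) then show ?case using assms by (simp add: matrix_matrix_mult_def sum_nonneg)
qed

lemma binomial_sum_step:
  fixes a :: "nat \<Rightarrow> real" and c :: real
  defines "\<beta> \<equiv> \<lambda>k m. real (k choose m) * c ^ (k - m)"
  shows "(\<Sum>m\<le>k. \<beta> k m * a (Suc m)) + (\<Sum>m\<le>k. c * \<beta> k m * a m) = (\<Sum>m\<le>Suc k. \<beta> (Suc k) m * a m)"
proof -
  have pas: "\<beta> (Suc k) (Suc m) = \<beta> k m + c * \<beta> k (Suc m)" if "m \<le> k" for m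
  proof (cases "m = k")
    case True then show ?thesis by (simp add: \<beta>_def)
  next
    case False
    then have "k - m = Suc (k - Suc m)" using that by simp
    then show ?thesis by (simp add: \<beta>_def algebra_simps)
  qed
  have shift: "(\<Sum>m\<le>Suc k. \<beta> (Suc k) m * a m) = \<beta> (Suc k) 0 * a 0 + (\<Sum>m\<le>k. \<beta> (Suc k) (Suc m) * a (Suc m))"
    by (rule sum.atMost_Suc_shift)
  have pascal: "(\<Sum>m\<le>k. \<beta> (Suc k) (Suc m) * a (Suc m)) = (\<Sum>m\<le>k. \<beta> k m * a (Suc m)) + (\<Sum>m\<le>k. c * \<beta> k (Suc m) * a (Suc m))"
    unfolding sum.distrib[symmetric] by (intro sum.cong refl) (simp add: pas algebra_simps)
  have first: "\<beta> (Suc k) 0 * a 0 = c * \<beta> k 0 * a 0" by (simp add: \<beta>_def)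
  have unshift: "c * \<beta> k 0 * a 0 + (\<Sum>m\<le>k. c * \<beta> k (Suc m) * a (Suc m)) = (\<Sum>m\<le>Suc k. c * \<beta> k m * a m)"
    by (rule sum.atMost_Suc_shift[symmetric])
  have top_zero: "(\<Sum>m\<le>Suc k. c * \<beta> k m * a m) = (\<Sum>m\<le>k. c * \<beta> k m * a m)" by (simp add: \<beta>_def)
  show ?thesis using shift pascal first unshift top_zero by linarith
qed

lemma matpow_add_scalar:
  fixes A :: "real^'n::finite^'n"
  shows "matpow (A + c *\<^sub>R mat 1) k $ i $ j = (\<Sum>m\<le>k. real (k choose m) * c ^ (k - m) * matpow A m $ i $ j)"
proof (induction k arbitrary: i j)
  case 0 then show ?case by simp
next
  case (Suc k)
  have "matpow (A + c *\<^sub>R mat 1) (Suc k) $ i $ j = (\<Sum>l\<in>UNIV. (A + c *\<^sub>R mat 1) $ i $ l * matpow (A + c *\<^sub>R mat 1) k $ l $ j)"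
    by (simp add: matrix_matrix_mult_def)
  also have "\<dots> = (\<Sum>l\<in>UNIV. A $ i $ l * matpow (A + c *\<^sub>R mat 1) k $ l $ j) + c * matpow (A + c *\<^sub>R mat 1) k $ i $ j"
    by (simp add: mat_def distrib_right sum.distrib mult.assoc if_distrib[where f="\<lambda>u. u * _"] if_distrib[where f="\<lambda>u. _ * u"] cong: if_cong)
  also have "(\<Sum>l\<in>UNIV. A $ i $ l * matpow (A + c *\<^sub>R mat 1) k $ l $ j) = (\<Sum>m\<le>k. real (k choose m) * c ^ (k - m) * matpow A (Suc m) $ i $ j)"
    by (simp add: Suc matrix_matrix_mult_def sum_distrib_left mult_ac) (rule sum.swap)
  also have "c * matpow (A + c *\<^sub>R mat 1) k $ i $ j = (\<Sum>m\<le>k. c * (real (k choose m) * c ^ (k - m)) * matpow A m $ i $ j)"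
    by (simp add: Suc sum_distrib_left mult_ac)
  finally show ?case using binomial_sum_step[of k c "\<lambda>m. matpow A m $ i $ j"] by simp
qed

lemma summable_exp_series_entry:
  fixes B :: "real^'n::finite^'n"
  shows "summable (\<lambda>m. norm (matpow B m $ i $ j / fact m))"
proof (rule summable_comparison_test[OF _ summable_exp[of "entry_abs_sum B"]])
  have "norm (norm (matpow B n $ i $ j / fact n)) \<le> inverse (fact n) * entry_abs_sum B ^ n" for n
    using matpow_entry_abs_le[of B n i j] by (simp add: divide_inverse abs_mult mult.commute mult_left_mono)
  then show "\<exists>N. \<forall>n\<ge>N. norm (norm (matpow B n $ i $ j / fact n)) \<le> inverse (fact n) * entry_abs_sum B ^ n"
    by blast
qed

lemma exp_series_entry_add_scalar_sums:
  fixes B :: "real^'n::finite^'n"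
  shows "(\<lambda>k. matpow (B + c *\<^sub>R mat 1) k $ i $ j / fact k) sums ((\<Sum>m. matpow B m $ i $ j / fact m) * exp c)"
proof -
  define u where "u = (\<lambda>m. matpow B m $ i $ j / fact m)"
  define v where "v = (\<lambda>l. c ^ l / fact l)"
  have sv: "summable (\<lambda>l. norm (v l))"
    using summable_exp[of "\<bar>c\<bar>"] by (simp add: v_def abs_mult power_abs divide_inverse mult.commute)
  have conv: "(\<Sum>m\<le>k. u m * v (k - m)) = matpow (B + c *\<^sub>R mat 1) k $ i $ j / fact k" for k
  proof -
    have "(\<Sum>m\<le>k. u m * v (k - m)) = (\<Sum>m\<le>k. real (k choose m) * c ^ (k - m) * matpow B m $ i $ j) / fact k"
      unfolding sum_divide_distrib
    proof (intro sum.cong refl)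
      fix m assume "m \<in> {..k}"
      then have "real (k choose m) = fact k / (fact m * fact (k - m))" using binomial_fact by simp
      then show "u m * v (k - m) = real (k choose m) * c ^ (k - m) * matpow B m $ i $ j / fact k"
        by (simp add: u_def v_def field_simps)
    qed
    then show ?thesis by (simp add: matpow_add_scalar)
  qed
  have "(\<lambda>k. \<Sum>m\<le>k. u m * v (k - m)) sums (suminf u * suminf v)"
    unfolding u_def by (rule Cauchy_product_sums[OF summable_exp_series_entry sv])
  moreover have "suminf v = exp c"
    using exp_converges[of c] by (simp add: v_def divide_inverse mult.commute sums_iff)
  ultimately have "(\<lambda>k. matpow (B + c *\<^sub>R mat 1) k $ i $ j / fact k) sums (suminf u * exp c)"
    by (simp add: conv)
  then show ?thesis by (simp add: u_def)
qed

lemma exp_series_entry_nonneg: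
  fixes L :: "real^'n::finite^'n" and t d :: real
  assumes t0: "t \<ge> 0" and pos: "\<And>i j. (L + d *\<^sub>R mat 1) $ i $ j \<ge> 0"
  shows "summable (\<lambda>k. matpow (t *\<^sub>R L) k $ i $ j / fact k) \<and> (\<Sum>k. matpow (t *\<^sub>R L) k $ i $ j / fact k) \<ge> 0"
proof -
  define B where "B = t *\<^sub>R (L + d *\<^sub>R mat 1)"
  have tL: "t *\<^sub>R L = B + (- t * d) *\<^sub>R mat 1" by (simp add: B_def vec_eq_iff algebra_simps)
  have "(\<Sum>m. matpow B m $ i $ j / fact m) \<ge> 0"
    using pos t0 summable_exp_series_entry[of B i j]
    by (intro suminf_nonneg) (auto simp: B_def matpow_entry_nonneg summable_norm_cancel)
  then show ?thesis
    using exp_series_entry_add_scalar_sums[of B "- t * d" i j] unfolding tL[symmetric]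
    by (simp add: sums_iff)
qed

lemma cmat_of_real_mult: "cmat_of_real (A ** B) = cmat_of_real A ** cmat_of_real B"
  by (simp add: cmat_of_real_def matrix_matrix_mult_def vec_eq_iff)

lemma cmat_of_real_mat_1: "cmat_of_real (mat 1) = (mat 1 :: complex^'n::finite^'n)"
  by (simp add: cmat_of_real_def mat_def vec_eq_iff)

lemma matpow_cmat_of_real: "matpow (cmat_of_real A) k = cmat_of_real (matpow A k)"
  by (induction k) (simp_all add: cmat_of_real_mult cmat_of_real_mat_1)

lemma scaleR_cmat_of_real: "t *\<^sub>R cmat_of_real A = cmat_of_real (t *\<^sub>R A)"
  by (simp only: cmat_of_real_def vec_eq_iff vector_scaleR_component vec_lambda_beta) (simp add: scaleR_conv_of_real)

lemma mexp_cmat_of_real: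
  assumes "summable (\<lambda>k. matpow A k $ i $ j / fact k)"
  shows "mexp (cmat_of_real A) $ i $ j = complex_of_real (\<Sum>k. matpow A k $ i $ j / fact k)"
proof -
  have "mexp (cmat_of_real A) $ i $ j = (\<Sum>k. complex_of_real (matpow A k $ i $ j / fact k))"
    by (simp only: mexp_def matpow_cmat_of_real) (simp add: cmat_of_real_def)
  also have "\<dots> = complex_of_real (\<Sum>k. matpow A k $ i $ j / fact k)"
    by (rule suminf_of_real[OF assms, symmetric])
  finally show ?thesis .
qed

lemma degree_le_card: "degree E j \<le> CARD('n)" for E :: "'n::finite \<Rightarrow> 'n \<Rightarrow> bool"
  unfolding degree_def by (rule card_mono) auto

lemma ptrans_real_nonneg:
  fixes E :: "'n::finite \<Rightarrow> 'n \<Rightarrow> bool"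
  assumes "t \<ge> 0"
  shows "\<exists>p. ptrans E t k j = complex_of_real p \<and> p \<ge> 0"
proof -
  define L where "L = laplacian E"
  define d where "d = real CARD('n)"
  have pos: "(L + d *\<^sub>R mat 1) $ i $ l \<ge> 0" for i l
    using degree_le_card[of E i] by (auto simp: L_def d_def laplacian_def mat_def)
  from exp_series_entry_nonneg[OF assms pos, of k j] have
    summable: "summable (\<lambda>m. matpow (t *\<^sub>R L) m $ k $ j / fact m)" and nonneg: "(\<Sum>m. matpow (t *\<^sub>R L) m $ k $ j / fact m) \<ge> 0" by auto
  have "ptrans E t k j = complex_of_real (\<Sum>m. matpow (t *\<^sub>R L) m $ k $ j / fact m)"
    unfolding ptrans_def scaleR_cmat_of_real L_def[symmetric] by (rule mexp_cmat_of_real[OF summable])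
  then show ?thesis using nonneg by blast
qed

section \<open>Fidelities of classical states\<close>

lemma diag_mat_entry: "diag_mat w $ i $ j = (if i = j then w i else 0)"
  by (simp add: diag_mat_def)

lemma diag_mat_mult_left: "(diag_mat w ** A) $ i $ j = w i * A $ i $ j"
  by (simp add: matrix_matrix_mult_def diag_mat_def if_distrib[where f="\<lambda>u. u * _"] cong: if_cong)

lemma diag_mat_mult_right: "(A ** diag_mat w) $ i $ j = A $ i $ j * w j"
  by (simp add: matrix_matrix_mult_def diag_mat_def if_distrib[where f="\<lambda>u. _ * u"] cong: if_cong)

lemma diag_mat_mult_diag_mat: "diag_mat w ** diag_mat w' = diag_mat (\<lambda>k. w k * w' k)"
  by (simp add: vec_eq_iff diag_mat_mult_left diag_mat_entry)

lemma psd_diag_mat: assumes "\<And>k. r k \<ge> 0" shows "psd (diag_mat (\<lambda>k. complex_of_real (r k)))"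
proof -
  have "sesq (diag_mat (\<lambda>k. complex_of_real (r k))) x x = complex_of_real (\<Sum>k\<in>UNIV. r k * (cmod (x $ k))^2)" for x
  proof -
    have "sesq (diag_mat (\<lambda>k. complex_of_real (r k))) x x = (\<Sum>k\<in>UNIV. cnj (x $ k) * complex_of_real (r k) * x $ k)"
      by (simp add: sesq_def diag_mat_entry if_distrib[where f="\<lambda>u. _ * u"] if_distrib[where f="\<lambda>u. u * _"] cong: if_cong)
    also have "\<dots> = (\<Sum>k\<in>UNIV. complex_of_real (r k * (cmod (x $ k))^2))"
      by (intro sum.cong refl) (simp add: of_real_cmod_square mult_ac)
    finally show ?thesis by simp
  qed
  then show ?thesis using assms by (simp add: psd_iff_sesq sum_nonneg)
qed

lemma msqrt_diag_mat: assumes "\<And>k. r k \<ge> 0"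
  shows "msqrt (diag_mat (\<lambda>k. complex_of_real (r k))) = diag_mat (\<lambda>k. complex_of_real (sqrt (r k)))"
  by (rule msqrt_eqI[OF psd_diag_mat[OF assms] psd_diag_mat]) (simp_all add: assms diag_mat_mult_diag_mat flip: of_real_mult)

lemma psd_outer: "psd (outer v)"
  using psd_gram[of "\<lambda>j. if j = j0 then 1 else 0" "\<lambda>_. v"] by (simp add: gram_indicator)

lemma outer_square: "outer v ** outer v = sqnorm v *\<^sub>R outer v"
proof -
  have "(outer v ** outer v) $ k $ l = v $ k * cnj (v $ l) * (\<Sum>m\<in>UNIV. cnj (v $ m) * v $ m)" for k l
    by (simp add: outer_def matrix_matrix_mult_def sum_distrib_left mult_ac)
  moreover have "(\<Sum>m\<in>UNIV. cnj (v $ m) * v $ m) = complex_of_real (sqnorm v)"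
    using sesq_id_diag[of v] by (simp add: sesq_id)
  ultimately show ?thesis by (simp add: vec_eq_iff outer_def) (simp add: scaleR_conv_of_real mult_ac)
qed

lemma mtrace_outer: "mtrace (outer v) = complex_of_real (sqnorm v)"
  using sesq_id_diag[of v] by (simp add: sesq_id outer_def mtrace_def mult.commute)

lemma trace_msqrt_outer: "(Re (mtrace (msqrt (outer v))))^2 = sqnorm v"
proof -
  define X where "X = (1 / sqrt (sqnorm v)) *\<^sub>R outer v"
  have X: "psd X" using psd_outer[of v] sqnorm_nonneg[of v] by (simp add: X_def psd_iff_sesq sesq_scaleR)
  have "X ** X = outer v"
  proof (cases "sqnorm v = 0")
    case True
    then have "v = 0" by (rule sqnorm_zero)
    then show ?thesis by (simp add: X_def outer_def vec_eq_iff matrix_matrix_mult_def)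
  next
    case False
    then have "sqnorm v > 0" using sqnorm_nonneg[of v] by simp
    then show ?thesis by (simp add: X_def matrix_scalar_ac scalar_matrix_assoc[symmetric] outer_square)
  qed
  then have "msqrt (outer v) = X" by (rule msqrt_eqI[OF psd_outer X])
  then have "Re (mtrace (msqrt (outer v))) = sqnorm v / sqrt (sqnorm v)" by (simp add: X_def mtrace_scaleR mtrace_outer)
  then show ?thesis using sqnorm_nonneg[of v]
    by (cases "sqnorm v = 0") (simp_all add: power_divide power2_eq_square)
qed

definition quantum_evolution :: "('n::finite \<Rightarrow> 'n \<Rightarrow> bool) \<Rightarrow> real \<Rightarrow> complex^'n^'n" where
  "quantum_evolution E t = mexp (\<chi> a b. \<i> * complex_of_real t * laplacian E $ a $ b)"

definition trans_prob :: "('n::finite \<Rightarrow> 'n \<Rightarrow> bool) \<Rightarrow> real \<Rightarrow> 'n \<Rightarrow> 'n \<Rightarrow> real" where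
  "trans_prob E t k j = Re (ptrans E t k j)"

lemma ptrans_eq_trans_prob: assumes "t \<ge> 0" shows "ptrans E t k j = complex_of_real (trans_prob E t k j)"
  using ptrans_real_nonneg[OF assms, of E k j] by (auto simp: trans_prob_def)

lemma trans_prob_nonneg: assumes "t \<ge> 0" shows "trans_prob E t k j \<ge> 0"
  using ptrans_real_nonneg[OF assms, of E k j] by (auto simp: trans_prob_def)

definition classical_output :: "('n::finite \<Rightarrow> 'n \<Rightarrow> bool) \<Rightarrow> real \<Rightarrow> ('n \<Rightarrow> real) \<Rightarrow> 'n \<Rightarrow> real" where
  "classical_output E t z k = (\<Sum>j\<in>UNIV. trans_prob E t k j * z j)"

definition fidelity_vec :: "('n::finite \<Rightarrow> 'n \<Rightarrow> bool) \<Rightarrow> real \<Rightarrow> ('n \<Rightarrow> real) \<Rightarrow> 'n \<Rightarrow> complex^'n" where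
  "fidelity_vec E t z j = (\<chi> k. complex_of_real (sqrt (classical_output E t z k)) * quantum_evolution E t $ k $ j)"

lemma classical_output_nonneg: "t \<ge> 0 \<Longrightarrow> (\<And>j. z j \<ge> 0) \<Longrightarrow> classical_output E t z k \<ge> 0"
  unfolding classical_output_def by (intro sum_nonneg mult_nonneg_nonneg trans_prob_nonneg) auto

lemma fidelity_diag_state:
  fixes E :: "'n::finite \<Rightarrow> 'n \<Rightarrow> bool" and z :: "'n \<Rightarrow> real"
  assumes t0: "t \<ge> 0" and z0: "\<And>j. z j \<ge> 0"
  shows "fidelity (classical_map E t (diag_mat (\<lambda>k. complex_of_real (z k)))) (quantum_map E t (diag_mat (\<lambda>k. complex_of_real (z k))))
       = (Re (mtrace (msqrt (gram z (fidelity_vec E t z)))))^2"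
proof -
  define \<rho> where "\<rho> = diag_mat (\<lambda>k. complex_of_real (z k))"
  define q where "q = classical_output E t z"
  define U where "U = quantum_evolution E t"
  have q0: "q k \<ge> 0" for k unfolding q_def using classical_output_nonneg[OF t0 z0] .
  have cm: "classical_map E t \<rho> = diag_mat (\<lambda>k. complex_of_real (q k))"
  proof -
    have "(\<Sum>j\<in>UNIV. ptrans E t k j * \<rho> $ j $ j) = complex_of_real (q k)" for k
      by (simp add: \<rho>_def diag_mat_entry ptrans_eq_trans_prob[OF t0] q_def classical_output_def)
    then show ?thesis by (simp add: classical_map_def)
  qed
  have sq: "msqrt (classical_map E t \<rho>) = diag_mat (\<lambda>k. complex_of_real (sqrt (q k)))"
    unfolding cm by (rule msqrt_diag_mat[OF q0])
  have qm: "quantum_map E t \<rho> = U ** \<rho> ** adjoint U"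
    by (simp add: quantum_map_def U_def quantum_evolution_def Let_def)
  have "msqrt (classical_map E t \<rho>) ** quantum_map E t \<rho> ** msqrt (classical_map E t \<rho>) = gram z (fidelity_vec E t z)"
  proof -
    have "(diag_mat (\<lambda>k. complex_of_real (sqrt (q k))) ** (U ** \<rho> ** adjoint U) ** diag_mat (\<lambda>k. complex_of_real (sqrt (q k)))) $ k $ l
        = gram z (fidelity_vec E t z) $ k $ l" for k l
    proof -
      have "(U ** \<rho> ** adjoint U) $ k $ l = (\<Sum>j\<in>UNIV. U $ k $ j * complex_of_real (z j) * cnj (U $ l $ j))"
        by (subst matrix_matrix_mult_def) (simp add: adjoint_def \<rho>_def diag_mat_mult_right)
      then show ?thesis
        by (simp add: diag_mat_mult_left diag_mat_mult_right gram_def fidelity_vec_def q_def U_def sum_distrib_left sum_distrib_right mult_ac)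
    qed
    then show ?thesis unfolding sq qm by (simp add: vec_eq_iff)
  qed
  then show ?thesis unfolding fidelity_def \<rho>_def[symmetric] by simp
qed

definition local_fidelity :: "('n::finite \<Rightarrow> 'n \<Rightarrow> bool) \<Rightarrow> real \<Rightarrow> 'n \<Rightarrow> real" where
  "local_fidelity E t j = (\<Sum>k\<in>UNIV. trans_prob E t k j * (cmod (quantum_evolution E t $ k $ j))^2)"

lemma local_fidelity_nonneg: "t \<ge> 0 \<Longrightarrow> local_fidelity E t j \<ge> 0"
  unfolding local_fidelity_def by (intro sum_nonneg mult_nonneg_nonneg trans_prob_nonneg) auto

lemma loc_state_eq_diag_mat: "loc_state j0 = diag_mat (\<lambda>k. complex_of_real (if k = j0 then 1 else 0))"
  unfolding loc_state_def by (intro arg_cong[where f=diag_mat]) auto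

lemma fidelity_loc_state:
  fixes E :: "'n::finite \<Rightarrow> 'n \<Rightarrow> bool"
  assumes t0: "t \<ge> 0"
  shows "fidelity (classical_map E t (loc_state j0)) (quantum_map E t (loc_state j0)) = local_fidelity E t j0"
proof -
  define \<delta> where "\<delta> = (\<lambda>k::'n. if k = j0 then (1::real) else 0)"
  have d0: "\<delta> j \<ge> 0" for j by (simp add: \<delta>_def)
  have "fidelity (classical_map E t (loc_state j0)) (quantum_map E t (loc_state j0))
      = (Re (mtrace (msqrt (gram \<delta> (fidelity_vec E t \<delta>)))))^2"
    using fidelity_diag_state[OF t0 d0, of E] by (simp add: loc_state_eq_diag_mat \<delta>_def)
  also have "gram \<delta> (fidelity_vec E t \<delta>) = outer (fidelity_vec E t \<delta> j0)"
    unfolding \<delta>_def by (rule gram_indicator)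
  also have "(Re (mtrace (msqrt \<dots>)))^2 = sqnorm (fidelity_vec E t \<delta> j0)" by (rule trace_msqrt_outer)
  also have "\<dots> = local_fidelity E t j0"
  proof -
    have q: "classical_output E t \<delta> k = trans_prob E t k j0" for k
      by (simp add: classical_output_def \<delta>_def if_distrib[where f="\<lambda>u. _ * u"] cong: if_cong)
    have "(cmod (fidelity_vec E t \<delta> j0 $ k))^2 = trans_prob E t k j0 * (cmod (quantum_evolution E t $ k $ j0))^2" for k
      using trans_prob_nonneg[OF t0, of E k j0] by (simp add: fidelity_vec_def q norm_mult power_mult_distrib)
    then show ?thesis by (simp add: sqnorm_def local_fidelity_def)
  qed
  finally show ?thesis .
qed

definition out_weight :: "('n::finite \<Rightarrow> 'n \<Rightarrow> bool) \<Rightarrow> real \<Rightarrow> ('n \<Rightarrow> real) \<Rightarrow> 'n \<Rightarrow> 'n \<Rightarrow> real" where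
  "out_weight E t z j k = (if classical_output E t z k > 0 then trans_prob E t k j / classical_output E t z k else 0)"

lemma out_weight_nonneg: "t \<ge> 0 \<Longrightarrow> out_weight E t z j k \<ge> 0"
  by (simp add: out_weight_def trans_prob_nonneg)

lemma sum_out_weight_le_1: "(\<Sum>j\<in>UNIV. z j * out_weight E t z j k) \<le> 1"
proof (cases "classical_output E t z k > 0")
  case True
  then have "(\<Sum>j\<in>UNIV. z j * out_weight E t z j k) = classical_output E t z k / classical_output E t z k"
    by (simp add: out_weight_def classical_output_def sum_divide_distrib[symmetric] mult_ac)
  then show ?thesis using True by simp
qed (simp add: out_weight_def)

lemma local_fidelity_le_out_weight:
  assumes t0: "t \<ge> 0" and z0: "\<And>j. z j \<ge> 0" and zj: "z j > 0"
  shows "local_fidelity E t j \<le> (\<Sum>k\<in>UNIV. out_weight E t z j k * (cmod (fidelity_vec E t z j $ k))^2)"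
  unfolding local_fidelity_def
proof (rule sum_mono)
  fix k
  define q where "q = classical_output E t z k"
  have q0: "q \<ge> 0" unfolding q_def using classical_output_nonneg[OF t0 z0] .
  have "trans_prob E t k j * (cmod (quantum_evolution E t $ k $ j))^2 = out_weight E t z j k * (cmod (fidelity_vec E t z j $ k))^2"
  proof (cases "q > 0")
    case True then show ?thesis by (simp add: out_weight_def fidelity_vec_def norm_mult power_mult_distrib q_def)
  next
    case False
    have "trans_prob E t k j * z j \<le> q" unfolding q_def classical_output_def
      by (rule member_le_sum) (auto intro!: mult_nonneg_nonneg trans_prob_nonneg[OF t0] z0)
    then have "trans_prob E t k j = 0"
      using False q0 zj trans_prob_nonneg[OF t0, of E k j] by (simp add: mult_le_0_iff)
    then show ?thesis using False by (simp add: out_weight_def q_def)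
  qed
  then show "trans_prob E t k j * (cmod (quantum_evolution E t $ k $ j))^2 \<le> out_weight E t z j k * (cmod (fidelity_vec E t z j $ k))^2"
    by simp
qed

lemma Min_local_fidelity_le_fidelity:
  fixes E :: "'n::finite \<Rightarrow> 'n \<Rightarrow> bool" and z :: "'n \<Rightarrow> real"
  assumes t0: "t \<ge> 0" and z0: "\<And>j. z j \<ge> 0" and z1: "(\<Sum>j\<in>UNIV. z j) = 1"
  defines "\<rho> \<equiv> diag_mat (\<lambda>k. complex_of_real (z k))"
  shows "Min (range (local_fidelity E t)) \<le> fidelity (classical_map E t \<rho>) (quantum_map E t \<rho>)"
proof -
  define X where "X = msqrt (gram z (fidelity_vec E t z))"
  define m where "m = Min (range (local_fidelity E t))"
  have X: "psd X" and XX: "X ** X = gram z (fidelity_vec E t z)"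
    unfolding X_def using psd_msqrt[OF psd_gram[of z "fidelity_vec E t z", OF z0]] by auto
  have m0: "m \<ge> 0" unfolding m_def using local_fidelity_nonneg[OF t0] by (subst Min_ge_iff) auto
  have "sqrt m = (\<Sum>j\<in>UNIV. z j * sqrt m)" by (simp add: sum_distrib_right[symmetric] z1)
  also have "\<dots> \<le> (\<Sum>j\<in>UNIV. z j * sqrt (local_fidelity E t j))"
    unfolding m_def using z0 by (intro sum_mono mult_left_mono) auto
  also have "\<dots> \<le> Re (mtrace X)"
    by (rule weighted_sqrt_sum_le_trace_sqrt[OF X XX z0 out_weight_nonneg[OF t0] sum_out_weight_le_1
          local_fidelity_le_out_weight[OF t0 z0]])
  finally have "m \<le> (Re (mtrace X))^2" using m0 by (metis sqrt_le_D)
  then show ?thesis using fidelity_diag_state[OF t0 z0, of E] by (simp add: m_def X_def \<rho>_def)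
qed

lemma INF_attained_at_finite_family:
  fixes F :: "'a \<Rightarrow> real" and g :: "'j::finite \<Rightarrow> 'a"
  assumes "range g \<subseteq> S" and "\<And>x. x \<in> S \<Longrightarrow> Min (range (F \<circ> g)) \<le> F x"
  shows "(\<exists>j. \<forall>x\<in>S. F (g j) \<le> F x) \<and> (INF x\<in>S. F x) = Min (range (\<lambda>j. F (g j)))
    \<and> 1 - (INF x\<in>S. F x) = Max (range (\<lambda>j. 1 - F (g j)))"
proof -
  have "Min (range (F \<circ> g)) \<in> range (F \<circ> g)" by (rule Min_in) auto
  then obtain j0 where j0: "F (g j0) = Min (range (F \<circ> g))" by (metis comp_apply rangeE)
  have le: "F (g j0) \<le> F x" if "x \<in> S" for x using assms(2)[OF that] j0 by simp
  have inf: "(INF x\<in>S. F x) = F (g j0)"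
    using assms(1) le by (intro cInf_eq_minimum) auto
  have "Min (range (\<lambda>j. F (g j))) = F (g j0)" using j0 by (simp add: comp_def)
  moreover have "Max (range (\<lambda>j. 1 - F (g j))) = 1 - F (g j0)"
    using assms(1) le by (intro Max_eqI) auto
  ultimately show ?thesis using le inf by auto
qed

theorem theorem1:
  fixes E :: "'n::finite \<Rightarrow> 'n \<Rightarrow> bool" and t :: real
  assumes "simple_graph E" and "t \<ge> 0"
  shows "(\<exists>j. \<forall>\<rho>\<in>(classical_states :: (complex^'n^'n) set).
            fidelity (classical_map E t (loc_state j)) (quantum_map E t (loc_state j))
            \<le> fidelity (classical_map E t \<rho>) (quantum_map E t \<rho>))
       \<and> (INF \<rho>\<in>(classical_states :: (complex^'n^'n) set).
            fidelity (classical_map E t \<rho>) (quantum_map E t \<rho>))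
         = Min ((\<lambda>j. fidelity (classical_map E t (loc_state j)) (quantum_map E t (loc_state j))) ` UNIV)
       \<and> D_QC E t
         = Max ((\<lambda>j. 1 - fidelity (classical_map E t (loc_state j)) (quantum_map E t (loc_state j))) ` UNIV)"
proof -
  let ?F = "\<lambda>\<rho>. fidelity (classical_map E t \<rho>) (quantum_map E t \<rho>)"
  have local: "?F \<circ> loc_state = local_fidelity E t"
    by (simp add: fun_eq_iff fidelity_loc_state[OF assms(2)])
  have "range loc_state \<subseteq> (classical_states :: (complex^'n^'n) set)"
    unfolding classical_states_def loc_state_eq_diag_mat
    by (force intro!: exI[of _ "\<lambda>k. if k = _ then 1 else 0"])
  moreover have "Min (range (?F \<circ> loc_state)) \<le> ?F \<rho>" if "\<rho> \<in> classical_states" for \<rho>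
    using that Min_local_fidelity_le_fidelity[OF assms(2)] unfolding local classical_states_def by auto
  ultimately show ?thesis
    using INF_attained_at_finite_family[of loc_state classical_states ?F] by (simp add: D_QC_def)
qed

end
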